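(* Let $\kappa$ be an infinite cardinal and let $G$ be a topological gyrogroup. If $G$ has one of the following properties, then $G^{\bullet}$ has the same property: (1) $G$ is metrizable; (2) $G$ has a local base at the identity of cardinality $\le\kappa$; (3) $G$ has a network of cardinality $\le\kappa$; (4) $G$ has a dense subset of cardinality $\le\kappa$; (5) $G$ is $\kappa$-narrow.
   Context: A gyrogroup is a set $G$ with a binary operation $\oplus$ such that: (G1) there is a unique identity $0$ with $0\oplus a=a=a\oplus 0$; (G2) each $x$ has a unique inverse $\ominus x$ with $\ominus x\oplus x=0=x\oplus(\ominus x)$; (G3) for all $x,y$ there is an automorphism $\mathrm{gyr}[x,y]$ of $(G,\oplus)$ with $x\oplus(y\oplus z)=(x\oplus y)\oplus \mathrm{gyr}[x,y](z)$ for all $z$; (G4) $\mathrm{gyr}[x\oplus y,y]=\mathrm{gyr}[x,y]$. A topological gyrogroup is a gyrogroup with a topology (all spaces are assumed $T_1$) such that $\oplus$ is jointly continuous and $x\mapsto\ominus x$ is continuous. A network of a space $X$ is a family $\mathcal{P}$ of subsets such that for every $x\in X$ and open $U\ni x$ there is $P\in\mathcal{P}$ with $x\in P\subseteq U$. A topological gyrogroup $G$ is left (right) $\kappa$-narrow if for every neighbourhood $U$ of $0$ there is $K\subseteq G$ with $|K|\le\kappa$ and $K\oplus U=G$ (resp. $U\oplus K=G$); it is $\kappa$-narrow if it is both left and right $\kappa$-narrow. Construction: let $J=[0,1)$ and let $G^{\bullet}$ be the set of all functions $f:J\to G$ for which there exist $0=a_0<a_1<\dots<a_n=1$ with $f$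 constant on each $[a_k,a_{k+1})$, with pointwise operation $(f\oplus^{\bullet}g)(r)=f(r)\oplus g(r)$. For an open neighbourhood $V$ of $0$ in $G$ and $\varepsilon>0$ let $O(V,\varepsilon)=\{f\in G^{\bullet}:\mu(\{r\in J: f(r)\notin V\})<\varepsilon\}$, $\mu$ Lebesgue measure. $G^{\bullet}$ carries the topological gyrogroup topology in which the sets $f\oplus^{\bullet}O(V,\varepsilon)$ form a local base at each $f\in G^{\bullet}$. *)

theory Defs
  imports "HOL-Analysis.Analysis" "HOL-Library.Equipollence"
begin

definition gyro_aut :: "'a set \<Rightarrow> ('a \<Rightarrow> 'a \<Rightarrow> 'a) \<Rightarrow> ('a \<Rightarrow> 'a) \<Rightarrow> bool" where
  "gyro_aut G op a \<longleftrightarrow> bij_betw a G G \<and> (\<forall>x\<in>G. \<forall>y\<in>G. a (op x y) = op (a x) (a y))"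

definition gyrogroup :: "'a set \<Rightarrow> ('a \<Rightarrow> 'a \<Rightarrow> 'a) \<Rightarrow> 'a \<Rightarrow> bool" where
  "gyrogroup G op e \<longleftrightarrow>
     e \<in> G \<and> (\<forall>x\<in>G. \<forall>y\<in>G. op x y \<in> G) \<and>
     (\<forall>a\<in>G. op e a = a \<and> op a e = a) \<and>
     (\<forall>x\<in>G. \<exists>y\<in>G. op y x = e \<and> op x y = e) \<and>
     (\<exists>gyr. (\<forall>x\<in>G. \<forall>y\<in>G. gyro_aut G op (gyr x y) \<and>
                 (\<forall>z\<in>G. op x (op y z) = op (op x y) (gyr x y z))) \<and>
            (\<forall>x\<in>G. \<forall>y\<in>G. \<forall>z\<in>G. gyr (op x y) y z = gyr x y z))"

definition ginv :: "'a set \<Rightarrow> ('a \<Rightarrow> 'a \<Rightarrow> 'a) \<Rightarrow> 'a \<Rightarrow> 'a \<Rightarrow> 'a" where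
  "ginv G op e x = (THE y. y \<in> G \<and> op y x = e \<and> op x y = e)"

definition topological_gyrogroup :: "'a set \<Rightarrow> ('a \<Rightarrow> 'a \<Rightarrow> 'a) \<Rightarrow> 'a \<Rightarrow> 'a topology \<Rightarrow> bool" where
  "topological_gyrogroup G op e T \<longleftrightarrow>
     gyrogroup G op e \<and> topspace T = G \<and> t1_space T \<and>
     continuous_map (prod_topology T T) T (\<lambda>(x, y). op x y) \<and>
     continuous_map T T (ginv G op e)"

text \<open>Functions J = [0,1) \<rightarrow> G, represented as functions real \<Rightarrow> 'a that
  equal the identity e outside J, which are step functions for a finite
  partition 0 = a_0 < ... < a_n = 1 (constant on each [a_k, a_{k+1})).\<close>
definition gbullet :: "'a set \<Rightarrow> 'a \<Rightarrow> (real \<Rightarrow> 'a) set" where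
  "gbullet G e = {f. (\<forall>r. r \<notin> {0..<1} \<longrightarrow> f r = e) \<and> (\<forall>r\<in>{0..<1}. f r \<in> G) \<and>
      (\<exists>(n::nat) (a::nat \<Rightarrow> real). a 0 = 0 \<and> a n = 1 \<and> (\<forall>k<n. a k < a (Suc k)) \<and>
          (\<forall>k<n. \<forall>r\<in>{a k..<a (Suc k)}. f r = f (a k)))}"

definition bop :: "('a \<Rightarrow> 'a \<Rightarrow> 'a) \<Rightarrow> (real \<Rightarrow> 'a) \<Rightarrow> (real \<Rightarrow> 'a) \<Rightarrow> (real \<Rightarrow> 'a)" where
  "bop op f g = (\<lambda>r. op (f r) (g r))"

definition Obullet :: "'a set \<Rightarrow> 'a \<Rightarrow> 'a set \<Rightarrow> real \<Rightarrow> (real \<Rightarrow> 'a) set" where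
  "Obullet G e V \<epsilon> = {f \<in> gbullet G e. measure lborel {r \<in> {0..<1}. f r \<notin> V} < \<epsilon>}"

text \<open>The topology on G-bullet in which the sets f (+) O(V,eps), V an open
  neighbourhood of e in G and eps > 0, form a local (neighbourhood) base at f.\<close>
definition bullet_topology :: "'a set \<Rightarrow> ('a \<Rightarrow> 'a \<Rightarrow> 'a) \<Rightarrow> 'a \<Rightarrow> 'a topology \<Rightarrow> (real \<Rightarrow> 'a) topology" where
  "bullet_topology G op e T = topology (\<lambda>U. U \<subseteq> gbullet G e \<and>
      (\<forall>f\<in>U. \<exists>V \<epsilon>. openin T V \<and> e \<in> V \<and> \<epsilon> > 0 \<and> bop op f ` Obullet G e V \<epsilon> \<subseteq> U))"

section \<open>Cardinal properties (cardinal bounded by |K|)\<close>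

definition has_local_base_card :: "'a topology \<Rightarrow> 'a \<Rightarrow> 'k set \<Rightarrow> bool" where
  "has_local_base_card T x K \<longleftrightarrow> (\<exists>\<B>. \<B> \<lesssim> K \<and> (\<forall>B\<in>\<B>. openin T B \<and> x \<in> B) \<and>
      (\<forall>U. openin T U \<and> x \<in> U \<longrightarrow> (\<exists>B\<in>\<B>. B \<subseteq> U)))"

definition is_network :: "'a topology \<Rightarrow> 'a set set \<Rightarrow> bool" where
  "is_network T \<P> \<longleftrightarrow> (\<forall>P\<in>\<P>. P \<subseteq> topspace T) \<and>
      (\<forall>x U. openin T U \<and> x \<in> U \<longrightarrow> (\<exists>P\<in>\<P>. x \<in> P \<and> P \<subseteq> U))"

definition has_network_card :: "'a topology \<Rightarrow> 'k set \<Rightarrow> bool" where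
  "has_network_card T K \<longleftrightarrow> (\<exists>\<P>. \<P> \<lesssim> K \<and> is_network T \<P>)"

definition has_dense_card :: "'a topology \<Rightarrow> 'k set \<Rightarrow> bool" where
  "has_dense_card T K \<longleftrightarrow> (\<exists>D. D \<subseteq> topspace T \<and> D \<lesssim> K \<and> T closure_of D = topspace T)"

definition left_narrow :: "'a topology \<Rightarrow> ('a \<Rightarrow> 'a \<Rightarrow> 'a) \<Rightarrow> 'a \<Rightarrow> 'k set \<Rightarrow> bool" where
  "left_narrow T op e K \<longleftrightarrow> (\<forall>U. U \<subseteq> topspace T \<and> e \<in> T interior_of U \<longrightarrow>
      (\<exists>S. S \<subseteq> topspace T \<and> S \<lesssim> K \<and> {op s u | s u. s \<in> S \<and> u \<in> U} = topspace T))"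

definition right_narrow :: "'a topology \<Rightarrow> ('a \<Rightarrow> 'a \<Rightarrow> 'a) \<Rightarrow> 'a \<Rightarrow> 'k set \<Rightarrow> bool" where
  "right_narrow T op e K \<longleftrightarrow> (\<forall>U. U \<subseteq> topspace T \<and> e \<in> T interior_of U \<longrightarrow>
      (\<exists>S. S \<subseteq> topspace T \<and> S \<lesssim> K \<and> {op u s | s u. s \<in> S \<and> u \<in> U} = topspace T))"

definition narrow :: "'a topology \<Rightarrow> ('a \<Rightarrow> 'a \<Rightarrow> 'a) \<Rightarrow> 'a \<Rightarrow> 'k set \<Rightarrow> bool" where
  "narrow T op e K \<longleftrightarrow> left_narrow T op e K \<and> right_narrow T op e K"

end

theory Submission
  imports Defs
begin

text \<open>Every element of \<open>G\<^sup>\<bullet>\<close> is a step function, so it takes only finitely many values, and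
  continuity of the finitely many left translations by these values controls the basic open sets
  \<open>f \<oplus> O(V, \<epsilon>)\<close>. A step function agrees, outside a set of small measure, with its samples on a
  fine uniform grid, and the grid functions with values in a set \<open>X\<close> form a family of cardinality at
  most \<open>|X| + \<aleph>\<^sub>0\<close>. Sampling a dense set, a network, or the witnesses of narrowness of \<open>G\<close> in this
  way yields the corresponding object for \<open>G\<^sup>\<bullet>\<close>, and a local base \<open>\<B>\<close> at the identity gives the
  local base of sets \<open>O(B, 1/n)\<close>. If \<open>m\<close> metrizes \<open>G\<close>, then the integral over \<open>[0,1)\<close> of
  \<open>min 1 (m (f r) (g r))\<close> metrizes \<open>G\<^sup>\<bullet>\<close>: by Markov's inequality its balls and the sets
  \<open>f \<oplus> O(V, \<epsilon>)\<close> refine each other.\<close>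

section \<open>Gyrogroups\<close>

locale gyrogroup_on =
  fixes G :: "'a set" and op :: "'a \<Rightarrow> 'a \<Rightarrow> 'a" and e :: 'a
  assumes gyrogroup: "gyrogroup G op e"
begin

lemma identity_in [simp]: "e \<in> G"
  and op_closed [simp]: "x \<in> G \<Longrightarrow> y \<in> G \<Longrightarrow> op x y \<in> G"
  and left_identity [simp]: "x \<in> G \<Longrightarrow> op e x = x"
  and right_identity [simp]: "x \<in> G \<Longrightarrow> op x e = x"
  using gyrogroup by (simp_all add: gyrogroup_def)

lemma inverse_exists: "x \<in> G \<Longrightarrow> \<exists>y\<in>G. op y x = e \<and> op x y = e"
  using gyrogroup by (simp add: gyrogroup_def)

lemma gyrations_exist:
  "\<exists>gyr. (\<forall>x\<in>G. \<forall>y\<in>G. gyro_aut G op (gyr x y) \<and> (\<forall>z\<in>G. op x (op y z) = op (op x y) (gyr x y z)))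
     \<and> (\<forall>x\<in>G. \<forall>y\<in>G. \<forall>z\<in>G. gyr (op x y) y z = gyr x y z)"
  using gyrogroup by (simp add: gyrogroup_def)

lemma left_cancel:
  assumes a: "a \<in> G" and b: "b \<in> G" and c: "c \<in> G" and eq: "op a b = op a c"
  shows "b = c"
proof -
  obtain gyr where
      gyr: "\<forall>x\<in>G. \<forall>y\<in>G. gyro_aut G op (gyr x y) \<and> (\<forall>z\<in>G. op x (op y z) = op (op x y) (gyr x y z))"
    using gyrations_exist by blast
  have aut: "\<And>x y. x \<in> G \<Longrightarrow> y \<in> G \<Longrightarrow> gyro_aut G op (gyr x y)"
    and assoc: "\<And>x y z. x \<in> G \<Longrightarrow> y \<in> G \<Longrightarrow> z \<in> G \<Longrightarrow> op x (op y z) = op (op x y) (gyr x y z)"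
    using gyr by blast+
  obtain y where y: "y \<in> G" "op y a = e" using inverse_exists[OF a] by blast
  have bij: "bij_betw (gyr y a) G G" using aut y a by (simp add: gyro_aut_def)
  have "op y (op a z) = gyr y a z" if "z \<in> G" for z
    using assoc[OF y(1) a that] y bij that by (simp add: bij_betw_apply)
  then have "gyr y a b = gyr y a c" using eq b c by metis
  then show ?thesis using bij b c by (metis bij_betw_imp_inj_on inj_onD)
qed

lemma ginv_inverse:
  assumes x: "x \<in> G"
  shows "ginv G op e x \<in> G \<and> op (ginv G op e x) x = e \<and> op x (ginv G op e x) = e"
proof -
  obtain y where y: "y \<in> G" "op y x = e" "op x y = e" using inverse_exists[OF x] by blast
  have "z = y" if z: "z \<in> G" "op x z = e" for z
    using left_cancel[OF x z(1) y(1)] z(2) y(3) by argo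
  then have "ginv G op e x = y" unfolding ginv_def using y by (intro the_equality) blast+
  then show ?thesis using y by simp
qed

lemma ginv_closed [simp]: "x \<in> G \<Longrightarrow> ginv G op e x \<in> G"
  and ginv_left [simp]: "x \<in> G \<Longrightarrow> op (ginv G op e x) x = e"
  and ginv_right [simp]: "x \<in> G \<Longrightarrow> op x (ginv G op e x) = e"
  using ginv_inverse by blast+

lemma ginv_identity [simp]: "ginv G op e e = e"
  by (metis ginv_closed ginv_right identity_in left_identity)

lemma ginv_ginv [simp]: "x \<in> G \<Longrightarrow> ginv G op e (ginv G op e x) = x"
  using left_cancel[of "ginv G op e x" "ginv G op e (ginv G op e x)" x] by simp

text \<open>The left cancellation law \<open>\<ominus>a \<oplus> (a \<oplus> b) = b\<close>: the left loop property (G4) turns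
  \<open>gyr[\<ominus>a, a]\<close> into \<open>gyr[0, a]\<close>, which is the identity.\<close>
lemma ginv_op_cancel [simp]:
  assumes a: "a \<in> G" and b: "b \<in> G"
  shows "op (ginv G op e a) (op a b) = b"
proof -
  obtain gyr where
      gyr: "\<forall>x\<in>G. \<forall>y\<in>G. gyro_aut G op (gyr x y) \<and> (\<forall>z\<in>G. op x (op y z) = op (op x y) (gyr x y z))"
    and loop_all: "\<forall>x\<in>G. \<forall>y\<in>G. \<forall>z\<in>G. gyr (op x y) y z = gyr x y z"
    using gyrations_exist by blast
  have aut: "\<And>x y. x \<in> G \<Longrightarrow> y \<in> G \<Longrightarrow> gyro_aut G op (gyr x y)"
    and assoc: "\<And>x y z. x \<in> G \<Longrightarrow> y \<in> G \<Longrightarrow> z \<in> G \<Longrightarrow> op x (op y z) = op (op x y) (gyr x y z)"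
    and loop: "\<And>x y z. x \<in> G \<Longrightarrow> y \<in> G \<Longrightarrow> z \<in> G \<Longrightarrow> gyr (op x y) y z = gyr x y z"
    using gyr loop_all by blast+
  let ?i = "ginv G op e a"
  have gyr_in: "gyr x y z \<in> G" if "x \<in> G" "y \<in> G" "z \<in> G" for x y z
    using aut[OF that(1,2)] that(3) by (auto simp: gyro_aut_def bij_betw_apply)
  have gyr_e: "gyr e a z = z" if z: "z \<in> G" for z
  proof -
    have "op e (op a z) = op (op e a) (gyr e a z)" by (rule assoc[OF identity_in a z])
    then have "op a z = op a (gyr e a z)" using a z by (metis left_identity op_closed)
    then show ?thesis using left_cancel[OF a z gyr_in[OF identity_in a z]] by simp
  qed
  have "op ?i (op a b) = op (op ?i a) (gyr ?i a b)" using assoc a b by simp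
  also have "\<dots> = gyr (op ?i a) a b" using loop[of ?i a b] a b gyr_in[of ?i a b] by simp
  also have "\<dots> = b" using a b gyr_e by simp
  finally show ?thesis .
qed

lemma op_ginv_cancel [simp]:
  "a \<in> G \<Longrightarrow> b \<in> G \<Longrightarrow> op a (op (ginv G op e a) b) = b"
  using ginv_op_cancel[OF ginv_closed] ginv_ginv by metis

text \<open>A choice of solutions of \<open>v \<oplus> a = b\<close> with \<open>v \<in> V\<close>, falling back to \<open>b\<close> (which solves it for \<open>a = 0\<close>).\<close>
lemma right_solution_choice:
  assumes VG: "V \<subseteq> G" and eV: "e \<in> V"
  obtains solve where "\<And>a b. b \<in> G \<Longrightarrow> solve a b \<in> G" "\<And>b. solve e b = b"
    "\<And>a b. \<exists>v\<in>V. op v a = b \<Longrightarrow> solve a b \<in> V \<and> op (solve a b) a = b"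
proof -
  define solve where "solve a b = (if \<exists>v\<in>V. op v a = b then SOME v. v \<in> V \<and> op v a = b else b)" for a b
  have sol: "solve a b \<in> V \<and> op (solve a b) a = b" if "\<exists>v\<in>V. op v a = b" for a b
    using someI_ex[of "\<lambda>v. v \<in> V \<and> op v a = b"] that unfolding solve_def by auto
  have "solve a b \<in> G" if "b \<in> G" for a b
    using sol[of a b] that VG unfolding solve_def by auto
  moreover have "solve e b = b" for b
  proof (cases "\<exists>v\<in>V. op v e = b")
    case True
    then have "solve e b \<in> V" "op (solve e b) e = b" using sol by blast+
    moreover from this(1) have "solve e b \<in> G" using VG by blast
    ultimately show ?thesis by simp
  next
    case False then show ?thesis unfolding solve_def by simp
  qed
  ultimately show ?thesis using that sol by blast
qed

end

lemma openin_nbhd_interior: "openin T V \<Longrightarrow> x \<in> V \<Longrightarrow> V \<subseteq> topspace T \<and> x \<in> T interior_of V"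
  by (simp add: interior_of_openin openin_subset)

locale topological_gyrogroup_on =
  fixes G :: "'a set" and op :: "'a \<Rightarrow> 'a \<Rightarrow> 'a" and e :: 'a and T :: "'a topology"
  assumes topological_gyrogroup: "topological_gyrogroup G op e T"
begin

sublocale gyrogroup_on G op e
  using topological_gyrogroup by unfold_locales (simp add: topological_gyrogroup_def)

lemma topspace_eq: "topspace T = G"
  using topological_gyrogroup by (simp add: topological_gyrogroup_def)

lemma continuous_map_left_translation:
  assumes c: "c \<in> G"
  shows "continuous_map T T (op c)"
proof -
  have "continuous_map (prod_topology T T) T (\<lambda>(x, y). op x y)"
    using topological_gyrogroup by (simp add: topological_gyrogroup_def)
  moreover have "continuous_map T (prod_topology T T) (\<lambda>x. (c, x))"
    using c topspace_eq by (intro continuous_map_pairedI) auto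
  ultimately have "continuous_map T T ((\<lambda>(x, y). op x y) \<circ> (\<lambda>x. (c, x)))"
    by (rule continuous_map_compose[rotated])
  then show ?thesis by (simp add: o_def)
qed

lemma left_translation_nbhd:
  assumes c: "c \<in> G" and V: "openin T V" and d: "d \<in> G" and cd: "op c d \<in> V"
  shows "\<exists>W. openin T W \<and> d \<in> W \<and> (\<forall>y\<in>W. op c y \<in> V)"
  using openin_continuous_map_preimage[OF continuous_map_left_translation[OF c] V] cd d topspace_eq
  by (intro exI[of _ "{x \<in> topspace T. op c x \<in> V}"]) auto

lemma common_nbhd_finite_translations:
  assumes C: "finite C" "C \<subseteq> G"
    and B: "\<And>c. c \<in> C \<Longrightarrow> openin T (B c) \<and> c \<in> B c"
  obtains V where "openin T V" "e \<in> V" "\<And>c y. c \<in> C \<Longrightarrow> y \<in> V \<Longrightarrow> op c y \<in> B c"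
proof -
  have "\<exists>W. openin T W \<and> e \<in> W \<and> (\<forall>y\<in>W. op c y \<in> B c)" if c: "c \<in> C" for c
    using left_translation_nbhd[of c "B c" e] c C B by auto
  then obtain W where W: "\<And>c. c \<in> C \<Longrightarrow> openin T (W c) \<and> e \<in> W c \<and> (\<forall>y\<in>W c. op c y \<in> B c)"
    by metis
  show ?thesis
  proof (rule that)
    show "openin T ((\<Inter>c\<in>C. W c) \<inter> topspace T)" using C W by (intro openin_INT) auto
    show "e \<in> (\<Inter>c\<in>C. W c) \<inter> topspace T" using W topspace_eq by auto
  qed (use W in blast)
qed

end

section \<open>Step functions on \<open>[0,1)\<close>\<close>

text \<open>\<open>step_fun S f\<close>: on \<open>[0,1)\<close>, \<open>f\<close> can only jump at the points of the finite set \<open>S\<close>. This is the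
  partition condition in \<open>gbullet\<close>, without the bookkeeping of an ordered list of break points.\<close>
definition step_fun :: "real set \<Rightarrow> (real \<Rightarrow> 'b) \<Rightarrow> bool" where
  "step_fun S f \<longleftrightarrow> finite S \<and>
     (\<forall>x y. 0 \<le> x \<longrightarrow> x \<le> y \<longrightarrow> y < 1 \<longrightarrow> (\<forall>s\<in>S. \<not> (x < s \<and> s \<le> y)) \<longrightarrow> f x = f y)"

lemma step_funD:
  "step_fun S f \<Longrightarrow> 0 \<le> x \<Longrightarrow> x \<le> y \<Longrightarrow> y < 1 \<Longrightarrow> (\<And>s. s \<in> S \<Longrightarrow> \<not> (x < s \<and> s \<le> y)) \<Longrightarrow> f x = f y"
  unfolding step_fun_def by blast

lemma step_fun_finite: "step_fun S f \<Longrightarrow> finite S"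
  unfolding step_fun_def by blast

lemma step_fun_combine:
  assumes "step_fun S f" "step_fun S' g"
  shows "step_fun (S \<union> S') (\<lambda>r. \<phi> (f r) (g r))"
proof -
  have "f x = f y \<and> g x = g y"
    if "0 \<le> x" "x \<le> y" "y < 1" "\<forall>s\<in>S \<union> S'. \<not> (x < s \<and> s \<le> y)" for x y
    using assms that unfolding step_fun_def by blast
  then show ?thesis using assms unfolding step_fun_def by simp
qed

lemma partition_imp_step_fun:
  assumes a0: "a 0 = 0" and an: "a n = 1" and inc: "\<forall>k<n. (a::nat\<Rightarrow>real) k < a (Suc k)"
    and cst: "\<forall>k<n. \<forall>r\<in>{a k..<a (Suc k)}. f r = f (a k)"
  shows "step_fun (a ` {..n}) f"
  unfolding step_fun_def
proof (intro conjI allI impI)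
  show "finite (a ` {..n})" by simp
  fix x y assume x0: "0 \<le> x" and xy: "x \<le> y" and y1: "y < 1" and ns: "\<forall>s\<in>a ` {..n}. \<not> (x < s \<and> s \<le> y)"
  define k where "k = (GREATEST k. k \<le> n \<and> a k \<le> x)"
  have ex: "0 \<le> n \<and> a 0 \<le> x" using a0 x0 by simp
  have kP: "k \<le> n \<and> a k \<le> x" unfolding k_def
    by (rule GreatestI_nat[of _ 0 n]) (use ex in auto)
  have kmax: "\<And>j. j \<le> n \<Longrightarrow> a j \<le> x \<Longrightarrow> j \<le> k" unfolding k_def
    by (rule Greatest_le_nat[of _ _ n]) auto
  have kn: "k < n" using kP an y1 xy by (metis le_less less_le_not_le order.strict_trans1)
  have xk: "x < a (Suc k)" using kmax[of "Suc k"] kn by force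
  have "a (Suc k) \<in> a ` {..n}" using kn by simp
  then have yk: "y < a (Suc k)"
  proof (rule_tac ccontr)
    assume m: "a (Suc k) \<in> a ` {..n}" and "\<not> y < a (Suc k)"
    then have "x < a (Suc k) \<and> a (Suc k) \<le> y" using xk by simp
    then show False using ns m by blast
  qed
  have "x \<in> {a k..<a (Suc k)}" using kP xk by simp
  then have "f x = f (a k)" using cst kn by blast
  moreover have "y \<in> {a k..<a (Suc k)}" using kP yk xy by simp
  then have "f y = f (a k)" using cst kn by blast
  ultimately show "f x = f y" by simp
qed

lemma enumerate_finite_subset_unit:
  fixes A :: "real set"
  assumes fA: "finite A" and A01: "A \<subseteq> {0..1}" and A0: "0 \<in> A" and A1: "1 \<in> A"
  obtains n :: nat and a :: "nat \<Rightarrow> real"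
  where "a 0 = 0" "a n = 1" "\<And>i j. i \<le> j \<Longrightarrow> j \<le> n \<Longrightarrow> a i \<le> a j"
    "\<And>i j. i < j \<Longrightarrow> j \<le> n \<Longrightarrow> a i < a j"
    "\<And>k. k \<le> n \<Longrightarrow> a k \<in> A" "\<And>x. x \<in> A \<Longrightarrow> \<exists>j\<le>n. a j = x"
proof -
  define L where "L = sorted_list_of_set A"
  have setL: "set L = A" and srt: "sorted_wrt (<) L"
    using fA by (auto simp: L_def sorted_list_of_set.strict_sorted_key_list_of_set)
  have sL: "sorted L" using srt by (simp add: strict_sorted_iff)
  have "card {0, 1::real} \<le> card A" using fA A0 A1 by (intro card_mono) auto
  moreover have "length L = card A" using fA by (simp add: L_def)
  ultimately have lenL: "length L \<ge> 2" by simp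
  define n where "n = length L - 1"
  define a where "a k = L ! k" for k
  have nL: "n < length L" using lenL unfolding n_def by simp
  have inA: "\<And>k. k \<le> n \<Longrightarrow> a k \<in> A" using nL setL unfolding a_def by (metis le_less_trans nth_mem)
  have idx: "\<And>x. x \<in> A \<Longrightarrow> \<exists>j\<le>n. a j = x" using setL unfolding a_def n_def
    by (metis in_set_conv_nth Suc_pred' less_Suc_eq_le bot_nat_0.extremum_strict lenL le_less_trans
          pos2 zero_less_iff_neq_zero)
  have mono: "\<And>i j. i \<le> j \<Longrightarrow> j \<le> n \<Longrightarrow> a i \<le> a j"
    unfolding a_def using sorted_nth_mono[OF sL] nL by (meson le_less_trans)
  have smono: "\<And>i j. i < j \<Longrightarrow> j \<le> n \<Longrightarrow> a i < a j"
    unfolding a_def using sorted_wrt_nth_less[OF srt] nL by (meson le_less_trans)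
  have a0: "a 0 = 0"
  proof -
    obtain j where "j \<le> n" "a j = 0" using idx[OF A0] by auto
    then have "a 0 \<le> 0" using mono[of 0 j] by simp
    then show ?thesis using A01 inA[of 0] by force
  qed
  have an: "a n = 1"
  proof -
    obtain j where "j \<le> n" "a j = 1" using idx[OF A1] by auto
    then have "1 \<le> a n" using mono[of j n] by simp
    then show ?thesis using A01 inA[of n] by force
  qed
  show ?thesis by (rule that[OF a0 an mono smono inA idx])
qed

lemma step_fun_imp_partition:
  assumes st: "step_fun S f"
  shows "\<exists>(n::nat) (a::nat \<Rightarrow> real). a 0 = 0 \<and> a n = 1 \<and> (\<forall>k<n. a k < a (Suc k)) \<and>
          (\<forall>k<n. \<forall>r\<in>{a k..<a (Suc k)}. f r = f (a k))"
proof -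
  define A where "A = (S \<inter> {0<..<1}) \<union> {0, 1::real}"
  have fA: "finite A" using st step_fun_finite unfolding A_def by auto
  have A01: "A \<subseteq> {0..1}" unfolding A_def by auto
  show ?thesis
  proof (rule enumerate_finite_subset_unit[OF fA A01])
    show "0 \<in> A" "1 \<in> A" unfolding A_def by auto
    fix n :: nat and a :: "nat \<Rightarrow> real"
    assume a0: "a 0 = 0" and an: "a n = 1" and mono: "\<And>i j. i \<le> j \<Longrightarrow> j \<le> n \<Longrightarrow> a i \<le> a j"
      and smono: "\<And>i j. i < j \<Longrightarrow> j \<le> n \<Longrightarrow> a i < a j"
      and inA: "\<And>k. k \<le> n \<Longrightarrow> a k \<in> A" and idx: "\<And>x. x \<in> A \<Longrightarrow> \<exists>j\<le>n. a j = x"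
    have cst: "f r = f (a k)" if kn: "k < n" and r: "r \<in> {a k..<a (Suc k)}" for k r
    proof -
      have "a k \<in> A" "a (Suc k) \<in> A" using inA kn by simp_all
      then have ak0: "0 \<le> a k" and r1: "r < 1" using A01 r by auto
      have "f (a k) = f r"
      proof (rule step_funD[OF st ak0 _ r1])
        show "a k \<le> r" using r by simp
        fix s assume s: "s \<in> S"
        show "\<not> (a k < s \<and> s \<le> r)"
        proof
          assume h: "a k < s \<and> s \<le> r"
          then have "s \<in> A" using s ak0 r1 unfolding A_def by auto
          then obtain j where j: "j \<le> n" "a j = s" using idx by blast
          have "k < j" using h j mono[of j k] kn by (metis not_le less_imp_le_nat order.trans not_less)
          then have "a (Suc k) \<le> a j" using mono[of "Suc k" j] j by simp
          then show False using h j r by simp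
        qed
      qed
      then show ?thesis by simp
    qed
    have "\<forall>k<n. a k < a (Suc k)" using smono by simp
    moreover have "\<forall>k<n. \<forall>r\<in>{a k..<a (Suc k)}. f r = f (a k)" using cst by blast
    ultimately show ?thesis using a0 an by blast
  qed
qed

lemma gbullet_iff:
  "f \<in> gbullet G e \<longleftrightarrow>
     (\<forall>r. r \<notin> {0..<1} \<longrightarrow> f r = e) \<and> (\<forall>r\<in>{0..<1}. f r \<in> G) \<and> (\<exists>S. step_fun S f)"
  unfolding gbullet_def using partition_imp_step_fun step_fun_imp_partition by blast

lemma step_fun_finite_range:
  assumes st: "step_fun S f"
  shows "finite (f ` {0..<1})"
proof -
  have "\<exists>t \<in> insert 0 S \<inter> {0..<1}. f r = f t" if r: "0 \<le> r" "r < 1" for r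
  proof -
    define t where "t = Max {t \<in> insert 0 S. t \<le> r}"
    have fin: "finite {t \<in> insert 0 S. t \<le> r}" using step_fun_finite[OF st] by simp
    have tin: "t \<in> {t \<in> insert 0 S. t \<le> r}" unfolding t_def using fin r by (intro Max_in) auto
    have tge: "0 \<le> t" unfolding t_def using fin r by (intro Max_ge) auto
    have "f t = f r"
    proof (rule step_funD[OF st tge _ r(2)])
      show "t \<le> r" using tin by simp
      show "\<not> (t < s \<and> s \<le> r)" if "s \<in> S" for s
        using Max_ge[OF fin, of s] that unfolding t_def[symmetric] by auto
    qed
    then show ?thesis using tin tge r by (intro bexI[of _ t]) auto
  qed
  then have "f ` {0..<1} \<subseteq> f ` (insert 0 S \<inter> {0..<1})" by fastforce
  then show ?thesis using step_fun_finite[OF st] finite_subset by blast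
qed

lemma step_fun_const_right:
  assumes st: "step_fun S f" and r: "0 \<le> r" "r < 1"
  obtains \<delta> where "\<delta> > 0" "r + \<delta> \<le> 1" "\<And>y. r \<le> y \<Longrightarrow> y < r + \<delta> \<Longrightarrow> f y = f r"
proof -
  define D where "D = insert (1 - r) ((\<lambda>s. s - r) ` {s\<in>S. r < s})"
  have fD: "finite D" using step_fun_finite[OF st] unfolding D_def by simp
  have pos: "Min D > 0" using fD r by (subst Min_gr_iff) (auto simp: D_def)
  have le1: "Min D \<le> 1 - r" using fD by (intro Min_le) (auto simp: D_def)
  have les: "Min D \<le> s - r" if "s \<in> S" "r < s" for s using fD that by (intro Min_le) (auto simp: D_def)
  have "f y = f r" if y: "r \<le> y" "y < r + Min D" for y
  proof -
    have "f r = f y"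
    proof (rule step_funD[OF st r(1)])
      show "r \<le> y" "y < 1" using y le1 by auto
      fix s assume "s \<in> S" then show "\<not> (r < s \<and> s \<le> y)" using les y by force
    qed
    then show ?thesis by simp
  qed
  moreover have "r + Min D \<le> 1" using le1 by simp
  ultimately show ?thesis using that pos by blast
qed

lemma step_fun_open_level_set:
  assumes st: "step_fun S F"
  shows "open {r. 0 < r \<and> r < 1 \<and> r \<notin> S \<and> P (F r)}"
proof -
  define Op where "Op = {r. 0 < r \<and> r < 1 \<and> r \<notin> S \<and> P (F r)}"
  have fS: "finite S" using step_fun_finite[OF st] .
  have "open Op"
    unfolding open_dist
  proof (intro ballI)
    fix r assume rO: "r \<in> Op"
    define D where "D = insert r (insert (1 - r) ((\<lambda>s. \<bar>s - r\<bar>) ` S))"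
    have fD: "finite D" using fS unfolding D_def by simp
    define \<epsilon> where "\<epsilon> = Min D"
    have epos: "\<epsilon> > 0" unfolding \<epsilon>_def using fD rO by (subst Min_gr_iff) (auto simp: D_def Op_def)
    have e1: "\<epsilon> \<le> r" "\<epsilon> \<le> 1 - r" unfolding \<epsilon>_def using fD by (auto intro!: Min_le simp: D_def simp del: Min_insert)
    have es: "\<And>s. s \<in> S \<Longrightarrow> \<epsilon> \<le> \<bar>s - r\<bar>" unfolding \<epsilon>_def using fD by (intro Min_le) (auto simp: D_def)
    have "\<forall>y. dist y r < \<epsilon> \<longrightarrow> y \<in> Op"
    proof (intro allI impI)
      fix y assume dy: "dist y r < \<epsilon>"
      then have y01: "0 < y" "y < 1" using e1 by (auto simp: dist_real_def)
      have yS: "y \<notin> S" using es dy by (force simp: dist_real_def)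
      have "F y = F r"
      proof (cases "r \<le> y")
        case True
        have "F r = F y"
        proof (rule step_funD[OF st])
          show "0 \<le> r" "r \<le> y" "y < 1" using rO True y01 by (auto simp: Op_def)
          fix s assume "s \<in> S" then show "\<not> (r < s \<and> s \<le> y)" using es dy by (force simp: dist_real_def)
        qed
        then show ?thesis by simp
      next
        case False
        show ?thesis
        proof (rule step_funD[OF st])
          show "0 \<le> y" "y \<le> r" "r < 1" using rO False y01 by (auto simp: Op_def)
          fix s assume "s \<in> S" then show "\<not> (y < s \<and> s \<le> r)" using es dy by (force simp: dist_real_def)
        qed
      qed
      then show "y \<in> Op" using rO y01 yS by (auto simp: Op_def)
    qed
    then show "\<exists>e>0. \<forall>y. dist y r < e \<longrightarrow> y \<in> Op" using epos by blast
  qed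
  then show ?thesis unfolding Op_def .
qed

lemma step_fun_level_set:
  assumes st: "step_fun S F"
  shows "{r \<in> {0..<1}. P (F r)} \<in> sets lborel"
proof -
  define Op where "Op = {r. 0 < r \<and> r < 1 \<and> r \<notin> S \<and> P (F r)}"
  have fS: "finite S" using step_fun_finite[OF st] .
  have m1: "Op \<in> sets lborel" unfolding Op_def using step_fun_open_level_set[OF st] by simp
  have m2: "insert 0 S \<inter> {r \<in> {0..<1}. P (F r)} \<in> sets lborel"
  proof -
    have "finite (insert 0 S \<inter> {r \<in> {0..<1}. P (F r)})" using fS by simp
    then have "closed (insert 0 S \<inter> {r \<in> {0..<1}. P (F r)})" by (rule finite_imp_closed)
    then show ?thesis by simp
  qed
  have eq: "{r \<in> {0..<1}. P (F r)} = Op \<union> (insert 0 S \<inter> {r \<in> {0..<1}. P (F r)})"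
    unfolding Op_def by (auto simp: less_le)
  show ?thesis by (subst eq) (rule sets.Un[OF m1 m2])
qed

lemma fmeasurable_Ico: "{a..<b::real} \<in> fmeasurable lborel"
  by (cases "a \<le> b") (auto simp: fmeasurable_def)

lemma step_fun_level_set_fmeasurable:
  assumes st: "step_fun S F"
  shows "{r \<in> {0..<1}. P (F r)} \<in> fmeasurable lborel"
  by (rule fmeasurableI2[OF fmeasurable_Ico _ step_fun_level_set[OF st]]) auto

lemma step_fun_borel:
  assumes st: "step_fun S (H::real\<Rightarrow>real)"
  shows "(\<lambda>x. indicator {0..<1::real} x *\<^sub>R H x) \<in> borel_measurable lborel"
proof -
  have "{w \<in> space lborel. a < indicator {0..<1::real} w *\<^sub>R H w} \<in> sets lborel" for a
  proof -
    have eq: "{w \<in> space lborel. a < indicator {0..<1::real} w *\<^sub>R H w} =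
       {r \<in> {0..<1}. a < H r} \<union> (if a < 0 then - {0..<1} else {})"
      by (auto simp: indicator_def)
    have m1: "{r \<in> {0..<1}. a < H r} \<in> sets lborel" using step_fun_level_set[OF st, of "\<lambda>v. a < v"] .
    have m2: "(if a < 0 then - {0..<1::real} else {}) \<in> sets lborel" by auto
    show ?thesis unfolding eq using m1 m2 by (rule sets.Un)
  qed
  then show ?thesis by (simp add: borel_measurable_iff_greater)
qed

lemma step_fun_set_integrable:
  assumes st: "step_fun S (H::real\<Rightarrow>real)" and bd: "\<And>r. \<bar>H r\<bar> \<le> c"
  shows "set_integrable lborel {0..<1} H"
  unfolding set_integrable_def
proof (rule integrableI_bounded_set[where A="{0..<1}" and B=c])
  show "(\<lambda>x. indicator {0..<1::real} x *\<^sub>R H x) \<in> borel_measurable lborel" by (rule step_fun_borel[OF st])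
  show "AE x in lborel. x \<in> {0..<1} \<longrightarrow> norm (indicator {0..<1::real} x *\<^sub>R H x) \<le> c"
    using bd by (auto simp: indicator_def)
  show "AE x in lborel. x \<notin> {0..<1} \<longrightarrow> indicator {0..<1::real} x *\<^sub>R H x = 0"
    by (auto simp: indicator_def)
qed auto

lemma set_integral_indicator_sub:
  fixes c :: real
  assumes "A \<subseteq> {0..<1::real}" "A \<in> sets lborel"
  shows "(LINT r:{0..<1}|lborel. c * indicator A r) = c * measure lborel A"
proof -
  have "(\<lambda>x. indicator {0..<1::real} x *\<^sub>R (c * indicator A x)) = (\<lambda>x. c * indicator A x)"
    using assms(1) by (auto simp: indicator_def fun_eq_iff)
  then show ?thesis unfolding set_lebesgue_integral_def by simp
qed

lemma set_integrable_indicator_sub: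
  fixes c :: real
  assumes "A \<subseteq> {0..<1::real}" "A \<in> sets lborel"
  shows "set_integrable lborel {0..<1} (\<lambda>r. c * indicator A r)"
proof -
  have eq: "(\<lambda>x. indicator {0..<1::real} x *\<^sub>R (c * indicator A x)) = (\<lambda>x. c * indicator A x)"
    using assms(1) by (auto simp: indicator_def fun_eq_iff)
  have "emeasure lborel A \<le> emeasure lborel {0..<1::real}" using assms by (intro emeasure_mono) auto
  then have "emeasure lborel A < \<infinity>" using le_less_trans by fastforce
  then show ?thesis unfolding set_integrable_def eq using assms by auto
qed

lemma measure_less_if_subset:
  "A \<in> sets lborel \<Longrightarrow> A \<subseteq> B \<Longrightarrow> B \<in> fmeasurable lborel \<Longrightarrow> measure lborel B < \<epsilon>
    \<Longrightarrow> measure lborel A < \<epsilon>"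
  using measure_mono_fmeasurable[of A B lborel] by linarith

lemma step_fun_set_integral_pos:
  fixes h :: "real \<Rightarrow> real"
  assumes st: "step_fun S h" and nonneg: "\<And>r. 0 \<le> h r" and bounded: "\<And>r. h r \<le> 1"
    and r0: "r0 \<in> {0..<1}" "h r0 > 0"
  shows "(LINT r:{0..<1}|lborel. h r) > 0"
proof -
  obtain \<delta> where d: "\<delta> > 0" "r0 + \<delta> \<le> 1" "\<And>y. r0 \<le> y \<Longrightarrow> y < r0 + \<delta> \<Longrightarrow> h y = h r0"
  proof (rule step_fun_const_right[OF st])
    show "0 \<le> r0" "r0 < 1" using r0(1) by auto
  qed blast
  define I where "I = {r0..<r0 + \<delta>}"
  have I01: "I \<subseteq> {0..<1}" using r0 d(1,2) unfolding I_def by auto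
  have Is: "I \<in> sets lborel" unfolding I_def by simp
  have "0 < h r0 * \<delta>" using r0(2) d(1) by simp
  also have "\<dots> = h r0 * measure lborel I" using d(1) unfolding I_def by simp
  also have "\<dots> = (LINT r:{0..<1}|lborel. h r0 * indicator I r)"
    using set_integral_indicator_sub[OF I01 Is, of "h r0"] by (rule sym)
  also have "\<dots> \<le> (LINT r:{0..<1}|lborel. h r)"
  proof (rule set_integral_mono[OF set_integrable_indicator_sub[OF I01 Is]])
    show "set_integrable lborel {0..<1} h"
      by (rule step_fun_set_integrable[OF st, of 1]) (use nonneg bounded in \<open>simp add: abs_le_iff\<close>)
    show "h r0 * indicator I x \<le> h x" for x
      using d(3)[of x] nonneg[of x] by (cases "x \<in> I") (auto simp: I_def)
  qed
  finally show ?thesis .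
qed

section \<open>Cardinal arithmetic\<close>

context includes cardinal_syntax
begin

lemma lepoll_iff_card_of: "A \<lesssim> B \<longleftrightarrow> |A| \<le>o |B|"
  unfolding lepoll_def card_of_ordLeq[symmetric] by blast

lemma times_lepoll_infinite:
  assumes K: "infinite K" and A: "A \<lesssim> K" and B: "B \<lesssim> K"
  shows "A \<times> B \<lesssim> K"
proof -
  have "|K \<times> K| =o |K|"
    using card_of_Times_infinite[of K K] K ordLeq_refl[OF card_of_Card_order] by fastforce
  then have "K \<times> K \<lesssim> K"
    unfolding lepoll_iff_card_of using ordIso_iff_ordLeq by blast
  then show ?thesis using times_lepoll_mono[OF A B] lepoll_trans by blast
qed

lemma lists_lepoll_infinite:
  assumes K: "infinite K" and X: "X \<lesssim> K"
  shows "lists X \<lesssim> K"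
proof -
  have lev: "{xs \<in> lists X. length xs = n} \<lesssim> K" for n
  proof (induction n)
    case 0
    have "{xs \<in> lists X. length xs = 0} = {[]}" by auto
    moreover have "{[]} \<lesssim> K" using K by (meson finite.emptyI finite_insert finite_lepoll_infinite)
    ultimately show ?case by simp
  next
    case (Suc n)
    have "{xs \<in> lists X. length xs = Suc n} = (\<lambda>(x,xs). x # xs) ` (X \<times> {xs \<in> lists X. length xs = n})"
      by (auto simp: length_Suc_conv image_def)
    moreover have "(\<lambda>(x,xs). x # xs) ` (X \<times> {xs \<in> lists X. length xs = n}) \<lesssim> K"
      using image_lepoll times_lepoll_infinite[OF K X Suc.IH] lepoll_trans by blast
    ultimately show ?case by simp
  qed
  have eq: "lists X = (\<Union>n\<in>(UNIV::nat set). {xs \<in> lists X. length xs = n})" by auto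
  have "|\<Union>n\<in>(UNIV::nat set). {xs \<in> lists X. length xs = n}| \<le>o |K|"
    using card_of_UNION_ordLeq_infinite[of K "UNIV::nat set" "\<lambda>n. {xs \<in> lists X. length xs = n}"] K
      infinite_le_lepoll[THEN iffD1, OF K] lev unfolding lepoll_iff_card_of by blast
  then show ?thesis using eq lepoll_iff_card_of by metis
qed

end

lemma insert_lepoll_infinite:
  assumes K: "infinite K" and A: "A \<lesssim> K"
  shows "insert a A \<lesssim> K"
proof (cases "finite A")
  case True then show ?thesis using K finite_lepoll_infinite by blast
next
  case False
  then have "insert a A \<approx> A" by (rule infinite_insert_eqpoll)
  then show ?thesis using A lepoll_trans1 by blast
qed

section \<open>Sampling on a uniform grid\<close>

text \<open>Cell \<open>k\<close> of the uniform grid of mesh \<open>1/N\<close> is \<open>[k/N, (k+1)/N)\<close>.\<close>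
definition cell :: "nat \<Rightarrow> real \<Rightarrow> nat" where
  "cell N r = nat \<lfloor>real N * r\<rfloor>"

definition grid_fun :: "'b list \<Rightarrow> 'b \<Rightarrow> real \<Rightarrow> 'b" where
  "grid_fun L d r = (if 0 \<le> r \<and> r < 1 then L ! cell (length L) r else d)"

lemma cell_index:
  assumes N: "N > 0" and r: "0 \<le> r" "r < 1"
  shows "cell N r < N" "real (cell N r) = of_int \<lfloor>real N * r\<rfloor>"
proof -
  have "real N * r < real N" using N r by simp
  then have "\<lfloor>real N * r\<rfloor> < int N" by (simp add: floor_less_iff)
  moreover have "0 \<le> \<lfloor>real N * r\<rfloor>" using r by simp
  ultimately show "cell N r < N" by (simp add: cell_def nat_less_iff)
  show "real (cell N r) = of_int \<lfloor>real N * r\<rfloor>" using r by (simp add: cell_def)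
qed

lemma grid_fun_in:
  assumes "set L \<subseteq> X" "L \<noteq> []" "0 \<le> r" "r < 1"
  shows "grid_fun L d r \<in> X"
  using assms cell_index[of "length L" r] by (auto simp: grid_fun_def)

lemma grid_fun_map:
  assumes "N > 0" "0 \<le> r" "r < 1"
  shows "grid_fun (map \<phi> [0..<N]) d r = \<phi> (cell N r)"
  using assms cell_index[of N r] by (simp add: grid_fun_def)

lemma grid_fun_step_fun:
  assumes L: "L \<noteq> []"
  shows "step_fun ((\<lambda>k. real k / real (length L)) ` {..length L}) (grid_fun L d)"
  unfolding step_fun_def
proof (intro conjI allI impI)
  define N where "N = length L"
  have N: "N > 0" using L by (simp add: N_def)
  show "finite ((\<lambda>k. real k / real (length L)) ` {..length L})" by simp
  fix x y assume x0: "0 \<le> x" and xy: "x \<le> y" and y1: "y < 1"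
    and ns: "\<forall>s\<in>(\<lambda>k. real k / real (length L)) ` {..length L}. \<not> (x < s \<and> s \<le> y)"
  define m where "m = cell N y"
  have mN: "m < N" using cell_index[OF N _ y1] x0 xy unfolding m_def by simp
  have my: "real m / N \<le> y" using x0 xy N unfolding m_def cell_def
    by (simp add: divide_le_eq mult.commute)
  have "\<not> (x < real m / N)" using ns mN my unfolding N_def by auto
  then have "real m / N \<le> x" by simp
  then have "real m \<le> N * x" using N by (simp add: divide_le_eq mult.commute)
  then have "\<lfloor>real N * x\<rfloor> \<ge> int m" by (metis floor_mono floor_of_nat)
  moreover have "\<lfloor>real N * x\<rfloor> \<le> \<lfloor>real N * y\<rfloor>" using xy N by (intro floor_mono) simp
  ultimately have "\<lfloor>real N * x\<rfloor> = \<lfloor>real N * y\<rfloor>" unfolding m_def cell_def using x0 xy by linarith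
  then show "grid_fun L d x = grid_fun L d y" using x0 xy y1 by (simp add: grid_fun_def cell_def N_def)
qed

definition cell_broken :: "real set \<Rightarrow> nat \<Rightarrow> nat \<Rightarrow> bool" where
  "cell_broken S N k \<longleftrightarrow> (\<exists>s\<in>S. real k / N < s \<and> s < (real k + 1) / N)"

lemma cells_broken_cover:
  assumes fS: "finite S" and N: "N > 0"
  obtains B where "B \<in> fmeasurable lborel" "measure lborel B \<le> real (card S) / N"
    "\<And>r. r \<in> {0..<1} \<Longrightarrow> cell_broken S N (cell N r) \<Longrightarrow> r \<in> B"
proof -
  define I where "I s = {of_int \<lfloor>real N * s\<rfloor> / real N ..< (of_int \<lfloor>real N * s\<rfloor> + 1) / real N}" for s
  define B where "B = (\<Union>s\<in>S. I s)"
  have Bf: "B \<in> fmeasurable lborel" unfolding B_def I_def using fS by (intro fmeasurable.finite_UN fmeasurable_Ico) auto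
  have "measure lborel B \<le> (\<Sum>s\<in>S. measure lborel (I s))"
    unfolding B_def using fS by (intro measure_UNION_le) (auto simp: I_def)
  also have "\<dots> = (\<Sum>s\<in>S. 1 / real N)"
  proof (rule sum.cong)
    fix s assume "s \<in> S"
    have "of_int \<lfloor>real N * s\<rfloor> / real N \<le> (of_int \<lfloor>real N * s\<rfloor> + 1) / real N"
      using N by (simp add: divide_right_mono)
    then show "measure lborel (I s) = 1 / real N" unfolding I_def using N
      by (simp add: measure_lborel_Ico diff_divide_distrib[symmetric])
  qed simp
  also have "\<dots> = real (card S) / N" by simp
  finally have mB: "measure lborel B \<le> real (card S) / N" .
  have c1: "r \<in> B" if r: "r \<in> {0..<1}" and cb: "cell_broken S N (cell N r)" for r
  proof -
    define k where "k = cell N r"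
    have kr: "real k = of_int \<lfloor>real N * r\<rfloor>" using r cell_index(2)[OF N, of r] unfolding k_def by auto
    obtain s where s: "s \<in> S" "real k / N < s" "s < (real k + 1) / N" using cb unfolding cell_broken_def k_def by blast
    have "real k < N * s" "N * s < real k + 1" using s N by (auto simp: field_simps)
    then have fs: "\<lfloor>real N * s\<rfloor> = \<lfloor>real N * r\<rfloor>" unfolding floor_eq_iff using kr by linarith
    have "real k \<le> N * r" "N * r < real k + 1"
      using kr of_int_floor_le[of "real N * r"] real_of_int_floor_add_one_gt[of "real N * r"] by linarith+
    then have "r \<in> I s" unfolding I_def fs kr[symmetric] using N by (auto simp: field_simps)
    then show ?thesis using s unfolding B_def by blast
  qed
  show ?thesis by (rule that[OF Bf mB c1])
qed

lemma step_fun_const_on_cell: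
  assumes st: "step_fun S f" and N: "N > 0" and r: "r \<in> {0..<1}"
    and cb: "\<not> cell_broken S N (cell N r)"
  shows "f r = f (real (cell N r) / N)"
proof -
  define k where "k = cell N r"
  have kr: "real k = of_int \<lfloor>real N * r\<rfloor>" using r cell_index(2)[OF N, of r] unfolding k_def by auto
  have a: "real k \<le> N * r" "N * r < real k + 1"
    using kr of_int_floor_le[of "real N * r"] real_of_int_floor_add_one_gt[of "real N * r"] by linarith+
  have "f (real k / N) = f r"
  proof (rule step_funD[OF st])
    show "0 \<le> real k / N" by simp
    show "real k / N \<le> r" using a N by (simp add: divide_le_eq mult.commute)
    show "r < 1" using r by simp
    fix s assume s: "s \<in> S"
    show "\<not> (real k / N < s \<and> s \<le> r)"
    proof
      assume h: "real k / N < s \<and> s \<le> r"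
      have "r < (real k + 1) / N" using a N by (simp add: field_simps)
      then have "cell_broken S N k" using h s unfolding cell_broken_def by force
      then show False using cb unfolding k_def by simp
    qed
  qed
  then show ?thesis unfolding k_def by simp
qed

lemma small_reciprocal:
  assumes "(\<epsilon>::real) > 0"
  shows "\<exists>N::nat. N > 0 \<and> c / real N < \<epsilon>"
proof -
  obtain N :: nat where N: "real N > c / \<epsilon>" using reals_Archimedean2 by blast
  define M where "M = Suc N"
  have "c / \<epsilon> < real M" using N unfolding M_def by simp
  then have "c < \<epsilon> * real M" using assms by (simp add: divide_less_eq mult.commute)
  then have "c / real M < \<epsilon>" by (simp add: divide_less_eq M_def mult.commute)
  then show ?thesis unfolding M_def by blast
qed

lemma step_fun_grid_approx:
  assumes st: "step_fun S f" and \<epsilon>: "\<epsilon> > 0"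
  obtains N B P where "N > 0" "B \<in> fmeasurable lborel" "measure lborel B < \<epsilon>"
    "\<And>r. r \<in> {0..<1} \<Longrightarrow> P (cell N r) \<Longrightarrow> r \<in> B"
    "\<And>r. r \<in> {0..<1} \<Longrightarrow> \<not> P (cell N r) \<Longrightarrow> f (real (cell N r) / N) = f r"
proof -
  obtain N :: nat where N: "N > 0" "real (card S) / N < \<epsilon>" using small_reciprocal[OF \<epsilon>] by blast
  obtain B where B: "B \<in> fmeasurable lborel" "measure lborel B \<le> real (card S) / N"
     "\<And>r. r \<in> {0..<1} \<Longrightarrow> cell_broken S N (cell N r) \<Longrightarrow> r \<in> B"
    by (rule cells_broken_cover[OF step_fun_finite[OF st] N(1)]) blast
  show ?thesis
  proof (rule that[OF N(1) B(1), of "cell_broken S N"])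
    show "measure lborel B < \<epsilon>" using B(2) N(2) by simp
    show "r \<in> B" if "r \<in> {0..<1}" "cell_broken S N (cell N r)" for r
      using that by (rule B(3))
    show "f (real (cell N r) / N) = f r" if "r \<in> {0..<1}" "\<not> cell_broken S N (cell N r)" for r
      using step_fun_const_on_cell[OF st N(1) that] by (rule sym)
  qed
qed

lemma grid_fun_sample:
  assumes "N > 0" "r \<in> {0..<1}"
  shows "grid_fun (map (\<lambda>k. if P k then d else \<sigma> (f (real k / N))) [0..<N]) d r
           = (if P (cell N r) then d else \<sigma> (f (real (cell N r) / N)))"
  using grid_fun_map[of N r "\<lambda>k. if P k then d else \<sigma> (f (real k / N))" d] assms by simp

definition grid_family :: "'b set \<Rightarrow> 'b \<Rightarrow> (real \<Rightarrow> 'b) set" where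
  "grid_family X d = (\<lambda>L. grid_fun L d) ` {L \<in> lists X. L \<noteq> []}"

lemma grid_family_lepoll:
  assumes "infinite K" "X \<lesssim> K"
  shows "grid_family X d \<lesssim> K"
proof -
  have "grid_family X d \<lesssim> {L \<in> lists X. L \<noteq> []}" unfolding grid_family_def by (rule image_lepoll)
  also have "\<dots> \<lesssim> lists X" by (rule subset_imp_lepoll) auto
  also have "\<dots> \<lesssim> K" using lists_lepoll_infinite[OF assms] .
  finally show ?thesis .
qed

lemma grid_familyE:
  assumes "\<Phi> \<in> grid_family X d"
  obtains L where "L \<noteq> []" "set L \<subseteq> X" "\<Phi> = grid_fun L d"
  using assms unfolding grid_family_def by auto

lemma grid_family_step_fun: "\<Phi> \<in> grid_family X d \<Longrightarrow> \<exists>S. step_fun S \<Phi>"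
  by (metis grid_familyE grid_fun_step_fun)

lemma grid_family_values:
  assumes "\<Phi> \<in> grid_family X d"
  shows "\<And>r. r \<in> {0..<1} \<Longrightarrow> \<Phi> r \<in> X" and "\<And>r. r \<notin> {0..<1} \<Longrightarrow> \<Phi> r = d"
proof -
  obtain L where L: "L \<noteq> []" "set L \<subseteq> X" "\<Phi> = grid_fun L d" using assms by (rule grid_familyE)
  show "\<Phi> r \<in> X" if "r \<in> {0..<1}" for r using grid_fun_in[OF L(2,1)] that L(3) by simp
  show "\<Phi> r = d" if "r \<notin> {0..<1}" for r using that L(3) by (auto simp: grid_fun_def)
qed

lemma grid_sample_in_family:
  assumes "N > 0" "\<And>k. k < N \<Longrightarrow> \<phi> k \<in> X"
  shows "grid_fun (map \<phi> [0..<N]) d \<in> grid_family X d"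
  using assms unfolding grid_family_def by (intro imageI) auto

text \<open>Sampling \<open>\<sigma> \<circ> f\<close> on the cells of a fine uniform grid: on the cells where the step function \<open>f\<close>
  jumps, whose total length is small, the sample is the default value \<open>d\<close>.\<close>
lemma step_fun_grid_sample:
  assumes st: "step_fun S f" and \<epsilon>: "\<epsilon> > 0" and \<sigma>: "\<And>r. r \<in> {0..<1} \<Longrightarrow> \<sigma> (f r) \<in> X"
  obtains s B where "s \<in> grid_family (insert d X) d" "B \<in> fmeasurable lborel" "measure lborel B < \<epsilon>"
    "\<And>r. r \<in> {0..<1} \<Longrightarrow> s r = d \<or> s r = \<sigma> (f r)"
    "\<And>r. r \<in> {0..<1} \<Longrightarrow> r \<notin> B \<Longrightarrow> s r = \<sigma> (f r)"
proof -
  obtain N B P where N: "N > 0" and B: "B \<in> fmeasurable lborel" "measure lborel B < \<epsilon>"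
    and PB: "\<And>r. r \<in> {0..<1} \<Longrightarrow> P (cell N r) \<Longrightarrow> r \<in> B"
    and cells: "\<And>r. r \<in> {0..<1} \<Longrightarrow> \<not> P (cell N r) \<Longrightarrow> f (real (cell N r) / N) = f r"
    by (rule step_fun_grid_approx[OF st \<epsilon>]) blast
  define s where "s = grid_fun (map (\<lambda>k. if P k then d else \<sigma> (f (real k / N))) [0..<N]) d"
  have "s \<in> grid_family (insert d X) d"
    unfolding s_def using N \<sigma> by (intro grid_sample_in_family) (auto simp: field_simps)
  moreover have "s r = (if P (cell N r) then d else \<sigma> (f r))" if r: "r \<in> {0..<1}" for r
    using grid_fun_sample[OF N r, of P d \<sigma> f] cells[OF r] unfolding s_def by auto
  ultimately show ?thesis using that B PB by fastforce
qed

section \<open>The topology of \<open>G\<^sup>\<bullet>\<close>\<close>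

context topological_gyrogroup_on
begin

abbreviation "GB \<equiv> gbullet G e"
abbreviation "BT \<equiv> bullet_topology G op e T"
abbreviation "neg \<equiv> ginv G op e"

lemma gbullet_step_fun: "f \<in> GB \<Longrightarrow> \<exists>S. step_fun S f"
  and gbullet_outside: "f \<in> GB \<Longrightarrow> r \<notin> {0..<1} \<Longrightarrow> f r = e"
  by (auto simp: gbullet_iff)

lemma gbullet_in_G: "f \<in> GB \<Longrightarrow> f r \<in> G"
  by (cases "r \<in> {0..<1}") (auto simp: gbullet_iff)

lemma gbulletI:
  "step_fun S f \<Longrightarrow> (\<And>r. f r \<in> G) \<Longrightarrow> (\<And>r. r \<notin> {0..<1} \<Longrightarrow> f r = e) \<Longrightarrow> f \<in> GB"
  unfolding gbullet_iff by blast

lemma gbullet_pointwise: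
  assumes f: "f \<in> GB" and g: "g \<in> GB" and closed: "\<And>x y. x \<in> G \<Longrightarrow> y \<in> G \<Longrightarrow> \<phi> x y \<in> G"
    and ee: "\<phi> e e = e"
  shows "(\<lambda>r. \<phi> (f r) (g r)) \<in> GB"
proof -
  obtain S S' where S: "step_fun S f" "step_fun S' g" using gbullet_step_fun f g by blast
  show ?thesis
  proof (rule gbulletI[OF step_fun_combine[OF S]])
    show "\<phi> (f r) (g r) \<in> G" for r using closed gbullet_in_G f g by blast
    show "\<phi> (f r) (g r) = e" if "r \<notin> {0..<1}" for r
      using gbullet_outside[OF f that] gbullet_outside[OF g that] ee by simp
  qed
qed

lemma bop_closed: "f \<in> GB \<Longrightarrow> g \<in> GB \<Longrightarrow> bop op f g \<in> GB"
  unfolding bop_def by (rule gbullet_pointwise) auto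

lemma left_quotient_closed: "f \<in> GB \<Longrightarrow> g \<in> GB \<Longrightarrow> (\<lambda>r. op (neg (f r)) (g r)) \<in> GB"
  using gbullet_pointwise[of f g "\<lambda>x y. op (neg x) y"] by simp

lemma bop_left_quotient: "f \<in> GB \<Longrightarrow> g \<in> GB \<Longrightarrow> bop op f (\<lambda>r. op (neg (f r)) (g r)) = g"
  using gbullet_in_G by (auto simp: bop_def)

lemma zero_in_gbullet: "(\<lambda>r. e) \<in> GB"
  by (rule gbulletI[where S="{}"]) (auto simp: step_fun_def)

lemma bop_zero: "h \<in> GB \<Longrightarrow> bop op (\<lambda>r. e) h = h"
  using gbullet_in_G by (auto simp: bop_def)

lemma gbullet_level_set_fmeasurable: "f \<in> GB \<Longrightarrow> {r \<in> {0..<1}. P (f r)} \<in> fmeasurable lborel"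
  using gbullet_step_fun step_fun_level_set_fmeasurable by blast

lemma gbullet_level_set: "f \<in> GB \<Longrightarrow> {r \<in> {0..<1}. P (f r)} \<in> sets lborel"
  using gbullet_level_set_fmeasurable fmeasurableD by blast

lemma Obullet_iff: "h \<in> Obullet G e V \<epsilon> \<longleftrightarrow> h \<in> GB \<and> measure lborel {r \<in> {0..<1}. h r \<notin> V} < \<epsilon>"
  by (simp add: Obullet_def)

lemma Obullet_mono:
  assumes "V' \<subseteq> V" "\<epsilon>' \<le> \<epsilon>"
  shows "Obullet G e V' \<epsilon>' \<subseteq> Obullet G e V \<epsilon>"
proof
  fix h assume h: "h \<in> Obullet G e V' \<epsilon>'"
  then have "h \<in> GB" by (simp add: Obullet_iff)
  then have "measure lborel {r \<in> {0..<1}. h r \<notin> V} \<le> measure lborel {r \<in> {0..<1}. h r \<notin> V'}"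
    using assms by (intro measure_mono_fmeasurable gbullet_level_set gbullet_level_set_fmeasurable) auto
  then show "h \<in> Obullet G e V \<epsilon>" using h assms by (simp add: Obullet_iff)
qed

lemma istopology_bullet:
  "istopology (\<lambda>U. U \<subseteq> GB \<and>
     (\<forall>f\<in>U. \<exists>V \<epsilon>. openin T V \<and> e \<in> V \<and> \<epsilon> > 0 \<and> bop op f ` Obullet G e V \<epsilon> \<subseteq> U))"
  unfolding istopology_def
proof (rule conjI; intro allI impI)
  fix U U'
  assume U: "U \<subseteq> GB \<and> (\<forall>f\<in>U. \<exists>V \<epsilon>. openin T V \<and> e \<in> V \<and> \<epsilon> > 0 \<and> bop op f ` Obullet G e V \<epsilon> \<subseteq> U)"
    and U': "U' \<subseteq> GB \<and> (\<forall>f\<in>U'. \<exists>V \<epsilon>. openin T V \<and> e \<in> V \<and> \<epsilon> > 0 \<and> bop op f ` Obullet G e V \<epsilon> \<subseteq> U')"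
  show "U \<inter> U' \<subseteq> GB \<and>
     (\<forall>f\<in>U \<inter> U'. \<exists>V \<epsilon>. openin T V \<and> e \<in> V \<and> \<epsilon> > 0 \<and> bop op f ` Obullet G e V \<epsilon> \<subseteq> U \<inter> U')"
  proof (intro conjI ballI)
    show "U \<inter> U' \<subseteq> GB" using U by blast
    fix f assume f: "f \<in> U \<inter> U'"
    obtain V \<epsilon> where v: "openin T V" "e \<in> V" "\<epsilon> > 0" "bop op f ` Obullet G e V \<epsilon> \<subseteq> U"
      using U f by blast
    obtain V' \<epsilon>' where v': "openin T V'" "e \<in> V'" "\<epsilon>' > 0" "bop op f ` Obullet G e V' \<epsilon>' \<subseteq> U'"
      using U' f by blast
    have "Obullet G e (V \<inter> V') (min \<epsilon> \<epsilon>') \<subseteq> Obullet G e V \<epsilon>"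
         "Obullet G e (V \<inter> V') (min \<epsilon> \<epsilon>') \<subseteq> Obullet G e V' \<epsilon>'" by (rule Obullet_mono; simp)+
    then have "bop op f ` Obullet G e (V \<inter> V') (min \<epsilon> \<epsilon>') \<subseteq> U \<inter> U'" using v v' by blast
    then show "\<exists>V \<epsilon>. openin T V \<and> e \<in> V \<and> 0 < \<epsilon> \<and> bop op f ` Obullet G e V \<epsilon> \<subseteq> U \<inter> U'"
      using v v' by (intro exI[of _ "V \<inter> V'"] exI[of _ "min \<epsilon> \<epsilon>'"]) auto
  qed
next
  fix \<K> assume "\<forall>K\<in>\<K>. K \<subseteq> GB \<and>
     (\<forall>f\<in>K. \<exists>V \<epsilon>. openin T V \<and> e \<in> V \<and> \<epsilon> > 0 \<and> bop op f ` Obullet G e V \<epsilon> \<subseteq> K)"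
  then show "\<Union> \<K> \<subseteq> GB \<and>
     (\<forall>f\<in>\<Union> \<K>. \<exists>V \<epsilon>. openin T V \<and> e \<in> V \<and> \<epsilon> > 0 \<and> bop op f ` Obullet G e V \<epsilon> \<subseteq> \<Union> \<K>)"
    by (meson Union_iff Union_least Union_upper order_trans)
qed

lemma openin_bullet:
  "openin BT U \<longleftrightarrow> U \<subseteq> GB \<and>
     (\<forall>f\<in>U. \<exists>V \<epsilon>. openin T V \<and> e \<in> V \<and> \<epsilon> > 0 \<and> bop op f ` Obullet G e V \<epsilon> \<subseteq> U)"
  unfolding bullet_topology_def using istopology_bullet by simp

lemma topspace_bullet: "topspace BT = GB"
proof
  show "topspace BT \<subseteq> GB" using openin_topspace[of BT] unfolding openin_bullet by blast
  have "bop op f ` Obullet G e G 1 \<subseteq> GB" if "f \<in> GB" for f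
    using bop_closed that by (auto simp: Obullet_iff)
  moreover have "openin T G" using topspace_eq by (metis openin_topspace)
  ultimately have "openin BT GB" unfolding openin_bullet by (meson identity_in zero_less_one order_refl)
  then show "GB \<subseteq> topspace BT" by (rule openin_subset)
qed

lemma bullet_interior_zeroD:
  assumes "(\<lambda>r. e) \<in> BT interior_of U"
  obtains V \<epsilon> where "openin T V" "e \<in> V" "\<epsilon> > 0" "Obullet G e V \<epsilon> \<subseteq> U"
proof -
  obtain W where W: "openin BT W" "(\<lambda>r. e) \<in> W" "W \<subseteq> U" using assms by (auto simp: interior_of_def)
  then obtain V \<epsilon> where v: "openin T V" "e \<in> V" "\<epsilon> > 0" "bop op (\<lambda>r. e) ` Obullet G e V \<epsilon> \<subseteq> W"
    unfolding openin_bullet by blast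
  have "Obullet G e V \<epsilon> \<subseteq> W" using v(4) bop_zero by (force simp: Obullet_iff)
  then show ?thesis using that v W by blast
qed

text \<open>Since \<open>g\<close> takes finitely many values, a single neighbourhood \<open>V\<close> of the identity keeps
  \<open>c \<oplus> V\<close> inside \<open>B\<close> for every value \<open>c \<in> B\<close> of \<open>g\<close>.\<close>
lemma Obullet_openin:
  assumes B: "openin T B" and \<epsilon>: "\<epsilon> > 0"
  shows "openin BT (Obullet G e B \<epsilon>)"
  unfolding openin_bullet
proof (intro conjI ballI)
  show "Obullet G e B \<epsilon> \<subseteq> GB" by (auto simp: Obullet_iff)
  fix g assume "g \<in> Obullet G e B \<epsilon>"
  then have g: "g \<in> GB" and mg: "measure lborel {r \<in> {0..<1}. g r \<notin> B} < \<epsilon>" by (auto simp: Obullet_iff)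
  define \<delta> where "\<delta> = \<epsilon> - measure lborel {r \<in> {0..<1}. g r \<notin> B}"
  define C where "C = g ` {0..<1} \<inter> B"
  have C: "finite C" "C \<subseteq> G"
    unfolding C_def using gbullet_step_fun[OF g] step_fun_finite_range gbullet_in_G[OF g] by auto
  obtain V where V: "openin T V" "e \<in> V" "\<And>c y. c \<in> C \<Longrightarrow> y \<in> V \<Longrightarrow> op c y \<in> B"
    by (rule common_nbhd_finite_translations[OF C, of "\<lambda>_. B"]) (use B C_def in auto)
  have "bop op g ` Obullet G e V \<delta> \<subseteq> Obullet G e B \<epsilon>"
  proof
    fix x assume "x \<in> bop op g ` Obullet G e V \<delta>"
    then obtain h where h: "h \<in> Obullet G e V \<delta>" and x: "x = bop op g h" by blast
    have hg: "h \<in> GB" and mh: "measure lborel {r \<in> {0..<1}. h r \<notin> V} < \<delta>" using h by (auto simp: Obullet_iff)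
    have xg: "x \<in> GB" unfolding x using bop_closed[OF g hg] .
    have "{r \<in> {0..<1}. x r \<notin> B} \<subseteq> {r \<in> {0..<1}. g r \<notin> B} \<union> {r \<in> {0..<1}. h r \<notin> V}"
      using V(3) unfolding x bop_def C_def by blast
    then have "measure lborel {r \<in> {0..<1}. x r \<notin> B}
        \<le> measure lborel ({r \<in> {0..<1}. g r \<notin> B} \<union> {r \<in> {0..<1}. h r \<notin> V})"
      by (intro measure_mono_fmeasurable gbullet_level_set[OF xg] fmeasurable.Un
          gbullet_level_set_fmeasurable g hg)
    also have "\<dots> \<le> measure lborel {r \<in> {0..<1}. g r \<notin> B} + measure lborel {r \<in> {0..<1}. h r \<notin> V}"
      by (intro measure_Un_le gbullet_level_set g hg)
    also have "\<dots> < \<epsilon>" using mh unfolding \<delta>_def by simp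
    finally show "x \<in> Obullet G e B \<epsilon>" using xg by (simp add: Obullet_iff)
  qed
  moreover have "\<delta> > 0" using mg unfolding \<delta>_def by simp
  ultimately show "\<exists>V \<epsilon>'. openin T V \<and> e \<in> V \<and> \<epsilon>' > 0 \<and> bop op g ` Obullet G e V \<epsilon>' \<subseteq> Obullet G e B \<epsilon>"
    using V by blast
qed

lemma zero_in_Obullet: "\<epsilon> > 0 \<Longrightarrow> e \<in> B \<Longrightarrow> (\<lambda>r. e) \<in> Obullet G e B \<epsilon>"
  using zero_in_gbullet by (simp add: Obullet_iff)

lemma ObulletI:
  assumes h: "h \<in> GB" and B: "B \<in> fmeasurable lborel" "measure lborel B < \<epsilon>"
    and good: "\<And>r. r \<in> {0..<1} \<Longrightarrow> r \<notin> B \<Longrightarrow> h r \<in> V"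
  shows "h \<in> Obullet G e V \<epsilon>"
proof -
  have "measure lborel {r \<in> {0..<1}. h r \<notin> V} < \<epsilon>"
    by (rule measure_less_if_subset[OF gbullet_level_set[OF h] _ B]) (use good in blast)
  then show ?thesis using h by (simp add: Obullet_iff)
qed

lemma translate_ObulletI:
  assumes f: "f \<in> GB" and g: "g \<in> GB" and B: "B \<in> fmeasurable lborel" "measure lborel B < \<epsilon>"
    and good: "\<And>r. r \<in> {0..<1} \<Longrightarrow> r \<notin> B \<Longrightarrow> op (neg (f r)) (g r) \<in> V"
  shows "g \<in> bop op f ` Obullet G e V \<epsilon>"
proof -
  have "(\<lambda>r. op (neg (f r)) (g r)) \<in> Obullet G e V \<epsilon>"
    using left_quotient_closed[OF f g] B good by (rule ObulletI)
  then show ?thesis using bop_left_quotient[OF f g] by (metis image_eqI)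
qed

lemma grid_family_subset_gbullet: "X \<subseteq> G \<Longrightarrow> grid_family X e \<subseteq> GB"
proof
  fix \<Phi> assume X: "X \<subseteq> G" and \<Phi>: "\<Phi> \<in> grid_family X e"
  obtain S where S: "step_fun S \<Phi>" using grid_family_step_fun[OF \<Phi>] by blast
  show "\<Phi> \<in> GB"
  proof (rule gbulletI[OF S])
    show "\<Phi> r \<in> G" for r
      using grid_family_values[OF \<Phi>, of r] X by (cases "r \<in> {0..<1}") auto
    show "\<Phi> r = e" if "r \<notin> {0..<1}" for r using grid_family_values(2)[OF \<Phi> that] .
  qed
qed

section \<open>Cardinal invariants of \<open>G\<^sup>\<bullet>\<close>\<close>

lemma bullet_local_base:
  assumes K: "infinite K" and base: "has_local_base_card T e K"
  shows "has_local_base_card BT (\<lambda>r. e) K"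
proof -
  obtain \<B> where B: "\<B> \<lesssim> K" "\<forall>B\<in>\<B>. openin T B \<and> e \<in> B"
      "\<forall>U. openin T U \<and> e \<in> U \<longrightarrow> (\<exists>B\<in>\<B>. B \<subseteq> U)"
    using base unfolding has_local_base_card_def by blast
  define \<N> where "\<N> = (\<lambda>(B, n::nat). Obullet G e B (1 / Suc n)) ` (\<B> \<times> UNIV)"
  have "\<N> \<lesssim> \<B> \<times> (UNIV::nat set)" unfolding \<N>_def by (rule image_lepoll)
  also have "\<B> \<times> (UNIV::nat set) \<lesssim> K"
    using times_lepoll_infinite[OF K B(1) infinite_le_lepoll[THEN iffD1, OF K]] .
  finally have NK: "\<N> \<lesssim> K" .
  have N1: "\<forall>N\<in>\<N>. openin BT N \<and> (\<lambda>r. e) \<in> N"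
    unfolding \<N>_def using B(2) Obullet_openin zero_in_Obullet by auto
  have N2: "\<exists>N\<in>\<N>. N \<subseteq> U" if U: "openin BT U" "(\<lambda>r. e) \<in> U" for U
  proof -
    have "(\<lambda>r. e) \<in> BT interior_of U" using U by (simp add: interior_of_openin)
    then obtain V \<epsilon> where v: "openin T V" "e \<in> V" "\<epsilon> > 0" "Obullet G e V \<epsilon> \<subseteq> U"
      by (rule bullet_interior_zeroD)
    obtain B0 where B0: "B0 \<in> \<B>" "B0 \<subseteq> V" using B(3) v by blast
    obtain n :: nat where n: "1 / Suc n < \<epsilon>" using v(3) nat_approx_posE by blast
    have "Obullet G e B0 (1 / Suc n) \<subseteq> Obullet G e V \<epsilon>" using B0 n by (intro Obullet_mono) auto
    moreover have "Obullet G e B0 (1 / Suc n) \<in> \<N>" unfolding \<N>_def using B0 by force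
    ultimately show ?thesis using v by blast
  qed
  show ?thesis unfolding has_local_base_card_def using NK N1 N2 by blast
qed

lemma bullet_dense:
  assumes K: "infinite K" and dense: "has_dense_card T K"
  shows "has_dense_card BT K"
proof -
  obtain D0 where D0: "D0 \<subseteq> G" "D0 \<lesssim> K" "T closure_of D0 = G"
    using dense topspace_eq by (auto simp: has_dense_card_def)
  define D where "D = grid_family (insert e D0) e"
  have DG: "D \<subseteq> GB" unfolding D_def using D0(1) by (intro grid_family_subset_gbullet) auto
  have DK: "D \<lesssim> K" unfolding D_def by (rule grid_family_lepoll[OF K insert_lepoll_infinite[OF K D0(2)]])
  have "f \<in> BT closure_of D" if f: "f \<in> GB" for f
    unfolding in_closure_of topspace_bullet
  proof (intro conjI allI impI f)
    fix U assume U: "f \<in> U \<and> openin BT U"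
    then obtain V \<epsilon> where v: "openin T V" "e \<in> V" "\<epsilon> > 0" "bop op f ` Obullet G e V \<epsilon> \<subseteq> U"
      unfolding openin_bullet by blast
    have "\<exists>d\<in>D0. op (neg c) d \<in> V" if c: "c \<in> G" for c
    proof -
      obtain W where W: "openin T W" "c \<in> W" "\<forall>y\<in>W. op (neg c) y \<in> V"
        using left_translation_nbhd[of "neg c" V c] c v by auto
      have "c \<in> T closure_of D0" using D0(3) c by simp
      then show ?thesis using W unfolding in_closure_of by blast
    qed
    then obtain \<sigma> where \<sigma>: "\<And>c. c \<in> G \<Longrightarrow> \<sigma> c \<in> D0 \<and> op (neg c) (\<sigma> c) \<in> V" by metis
    obtain S where S: "step_fun S f" using gbullet_step_fun[OF f] by blast
    have "\<sigma> (f r) \<in> D0" for r using \<sigma> gbullet_in_G[OF f] by blast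
    then obtain g B where g: "g \<in> D" and B: "B \<in> fmeasurable lborel" "measure lborel B < \<epsilon>"
      and good: "\<And>r. r \<in> {0..<1} \<Longrightarrow> r \<notin> B \<Longrightarrow> g r = \<sigma> (f r)"
      unfolding D_def by (rule step_fun_grid_sample[OF S v(3)]) blast
    have "g \<in> bop op f ` Obullet G e V \<epsilon>"
      using g DG good \<sigma>[OF gbullet_in_G[OF f]] by (intro translate_ObulletI[OF f _ B]) auto
    then show "\<exists>y. y \<in> D \<and> y \<in> U" using g v(4) by blast
  qed
  then have "BT closure_of D = GB" using closure_of_subset_topspace[of BT D] topspace_bullet by blast
  then show ?thesis unfolding has_dense_card_def topspace_bullet using DG DK by blast
qed

lemma grid_family_mismatch_fmeasurable:
  assumes g: "g \<in> GB" and \<Phi>: "\<Phi> \<in> grid_family X d"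
  shows "{r \<in> {0..<1}. g r \<notin> \<Phi> r} \<in> fmeasurable lborel"
proof -
  obtain S S' where "step_fun S g" "step_fun S' \<Phi>"
    using gbullet_step_fun[OF g] grid_family_step_fun[OF \<Phi>] by blast
  from step_fun_level_set_fmeasurable[OF step_fun_combine[OF this, of Pair], of "\<lambda>(a, b). a \<notin> b"]
  show ?thesis by simp
qed

lemma translate_Obullet_near_grid:
  assumes f: "f \<in> GB" and g: "g \<in> GB" and \<Phi>: "\<Phi> \<in> grid_family X d"
    and B: "B \<in> fmeasurable lborel"
    and small: "measure lborel B + measure lborel {r \<in> {0..<1}. g r \<notin> \<Phi> r} < \<epsilon>"
    and good: "\<And>r y. r \<in> {0..<1} \<Longrightarrow> r \<notin> B \<Longrightarrow> y \<in> \<Phi> r \<Longrightarrow> op (neg (f r)) y \<in> V"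
  shows "g \<in> bop op f ` Obullet G e V \<epsilon>"
proof -
  define B' where "B' = B \<union> {r \<in> {0..<1}. g r \<notin> \<Phi> r}"
  have B'f: "B' \<in> fmeasurable lborel"
    unfolding B'_def using B grid_family_mismatch_fmeasurable[OF g \<Phi>] by blast
  have "measure lborel B' \<le> measure lborel B + measure lborel {r \<in> {0..<1}. g r \<notin> \<Phi> r}"
    unfolding B'_def by (intro measure_Un_le fmeasurableD B grid_family_mismatch_fmeasurable[OF g \<Phi>])
  then have "measure lborel B' < \<epsilon>" using small by simp
  moreover have "op (neg (f r)) (g r) \<in> V" if r: "r \<in> {0..<1}" "r \<notin> B'" for r
    using r good unfolding B'_def by auto
  ultimately show ?thesis by (intro translate_ObulletI[OF f g B'f])
qed

lemma bullet_network:
  assumes K: "infinite K" and net: "has_network_card T K"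
  shows "has_network_card BT K"
proof -
  obtain \<P> where P: "\<P> \<lesssim> K" "is_network T \<P>" using net unfolding has_network_card_def by blast
  have Pnet: "\<And>x U. openin T U \<Longrightarrow> x \<in> U \<Longrightarrow> \<exists>P\<in>\<P>. x \<in> P \<and> P \<subseteq> U"
    using P(2) unfolding is_network_def by blast
  define NW where "NW \<Phi> M = {g \<in> GB. measure lborel {r \<in> {0..<1}. g r \<notin> \<Phi> r} < 1 / Suc M}"
    for \<Phi> :: "real \<Rightarrow> 'a set" and M :: nat
  define \<F> where "\<F> = (\<lambda>(\<Phi>, M). NW \<Phi> M) ` (grid_family (insert G \<P>) G \<times> UNIV)"
  have "\<F> \<lesssim> grid_family (insert G \<P>) G \<times> (UNIV::nat set)" unfolding \<F>_def by (rule image_lepoll)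
  also have "\<dots> \<lesssim> K"
    using times_lepoll_infinite[OF K grid_family_lepoll[OF K insert_lepoll_infinite[OF K P(1)]]
        infinite_le_lepoll[THEN iffD1, OF K]] .
  finally have FK: "\<F> \<lesssim> K" .
  have "is_network BT \<F>"
    unfolding is_network_def topspace_bullet
  proof (intro conjI allI impI ballI)
    show "Q \<subseteq> GB" if "Q \<in> \<F>" for Q using that unfolding \<F>_def NW_def by auto
  next
    fix f U assume fU: "openin BT U \<and> f \<in> U"
    then have f: "f \<in> GB" unfolding openin_bullet by blast
    obtain V \<epsilon> where v: "openin T V" "e \<in> V" "\<epsilon> > 0" "bop op f ` Obullet G e V \<epsilon> \<subseteq> U"
      using fU f unfolding openin_bullet by blast
    have "\<exists>P\<in>\<P>. c \<in> P \<and> (\<forall>y\<in>P. op (neg c) y \<in> V)" if c: "c \<in> G" for c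
    proof -
      obtain W where W: "openin T W" "c \<in> W" "\<forall>y\<in>W. op (neg c) y \<in> V"
        using left_translation_nbhd[of "neg c" V c] c v by auto
      then show ?thesis using Pnet[OF W(1,2)] by blast
    qed
    then obtain \<sigma> where \<sigma>: "\<And>c. c \<in> G \<Longrightarrow> \<sigma> c \<in> \<P> \<and> c \<in> \<sigma> c \<and> (\<forall>y\<in>\<sigma> c. op (neg c) y \<in> V)"
      by metis
    obtain M :: nat where M: "1 / Suc M < \<epsilon> / 2" using v(3) nat_approx_posE[of "\<epsilon> / 2"] by auto
    obtain S where S: "step_fun S f" using gbullet_step_fun[OF f] by blast
    have pos: "(0::real) < 1 / Suc M" by simp
    have "\<sigma> (f r) \<in> \<P>" for r using \<sigma> gbullet_in_G[OF f] by blast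
    then obtain \<Phi> B where \<Phi>: "\<Phi> \<in> grid_family (insert G \<P>) G"
      and B: "B \<in> fmeasurable lborel" "measure lborel B < 1 / Suc M"
      and \<Phi>_good: "\<And>r. r \<in> {0..<1} \<Longrightarrow> r \<notin> B \<Longrightarrow> \<Phi> r = \<sigma> (f r)"
      by (rule step_fun_grid_sample[OF S pos]) blast
    have "f \<in> NW \<Phi> M"
    proof -
      have "measure lborel {r \<in> {0..<1}. f r \<notin> \<Phi> r} < 1 / Suc M"
        by (rule measure_less_if_subset[OF fmeasurableD[OF grid_family_mismatch_fmeasurable[OF f \<Phi>]] _ B])
          (use \<Phi>_good \<sigma> gbullet_in_G[OF f] in blast)
      then show ?thesis unfolding NW_def using f by blast
    qed
    moreover have "NW \<Phi> M \<subseteq> U"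
    proof
      fix g assume "g \<in> NW \<Phi> M"
      then have g: "g \<in> GB" and mg: "measure lborel {r \<in> {0..<1}. g r \<notin> \<Phi> r} < 1 / Suc M"
        unfolding NW_def by auto
      have "g \<in> bop op f ` Obullet G e V \<epsilon>"
      proof (rule translate_Obullet_near_grid[OF f g \<Phi> B(1)])
        show "measure lborel B + measure lborel {r \<in> {0..<1}. g r \<notin> \<Phi> r} < \<epsilon>"
          using B(2) mg M by simp
        show "op (neg (f r)) y \<in> V" if "r \<in> {0..<1}" "r \<notin> B" "y \<in> \<Phi> r" for r y
          using \<Phi>_good[OF that(1,2)] that(3) \<sigma>[OF gbullet_in_G[OF f]] by blast
      qed
      then show "g \<in> U" using v(4) by blast
    qed
    moreover have "NW \<Phi> M \<in> \<F>" unfolding \<F>_def using \<Phi> by force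
    ultimately show "\<exists>Q\<in>\<F>. f \<in> Q \<and> Q \<subseteq> U" by blast
  qed
  then show ?thesis unfolding has_network_card_def using FK by blast
qed

lemma bullet_left_narrow:
  assumes K: "infinite K" and narrow: "left_narrow T op e K"
  shows "left_narrow BT (bop op) (\<lambda>r. e) K"
  unfolding left_narrow_def topspace_bullet
proof (intro allI impI)
  fix U assume U: "U \<subseteq> GB \<and> (\<lambda>r. e) \<in> BT interior_of U"
  then have "(\<lambda>r. e) \<in> BT interior_of U" by blast
  then obtain V \<epsilon> where v: "openin T V" "e \<in> V" "\<epsilon> > 0" "Obullet G e V \<epsilon> \<subseteq> U"
    by (rule bullet_interior_zeroD)
  have VG: "V \<subseteq> G" using openin_subset[OF v(1)] topspace_eq by simp
  obtain S0 where S0: "S0 \<subseteq> G" "S0 \<lesssim> K" "{op s u | s u. s \<in> S0 \<and> u \<in> V} = G"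
  proof -
    have "\<exists>S. S \<subseteq> topspace T \<and> S \<lesssim> K \<and> {op s u | s u. s \<in> S \<and> u \<in> V} = topspace T"
      using narrow openin_nbhd_interior[OF v(1,2)] unfolding left_narrow_def by blast
    then show ?thesis using that unfolding topspace_eq by blast
  qed
  have "\<exists>s\<in>S0. op (neg s) c \<in> V" if c: "c \<in> G" for c
  proof -
    obtain s u where su: "c = op s u" "s \<in> S0" "u \<in> V" using S0(3) c by blast
    moreover have "s \<in> G" "u \<in> G" using su S0(1) VG by auto
    ultimately have "op (neg s) c = u" by simp
    then show ?thesis using su(2,3) by (intro bexI[of _ s]) auto
  qed
  then obtain \<sigma> where \<sigma>: "\<And>c. c \<in> G \<Longrightarrow> \<sigma> c \<in> S0 \<and> op (neg (\<sigma> c)) c \<in> V" by metis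
  define \<S> where "\<S> = grid_family (insert e S0) e"
  have SG: "\<S> \<subseteq> GB" unfolding \<S>_def using S0(1) by (intro grid_family_subset_gbullet) auto
  have SK: "\<S> \<lesssim> K" unfolding \<S>_def by (rule grid_family_lepoll[OF K insert_lepoll_infinite[OF K S0(2)]])
  have "f \<in> {bop op s u | s u. s \<in> \<S> \<and> u \<in> U}" if f: "f \<in> GB" for f
  proof -
    obtain S where S: "step_fun S f" using gbullet_step_fun[OF f] by blast
    have "\<sigma> (f r) \<in> S0" for r using \<sigma> gbullet_in_G[OF f] by blast
    then obtain s B where s: "s \<in> \<S>" and B: "B \<in> fmeasurable lborel" "measure lborel B < \<epsilon>"
      and good: "\<And>r. r \<in> {0..<1} \<Longrightarrow> r \<notin> B \<Longrightarrow> s r = \<sigma> (f r)"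
      unfolding \<S>_def by (rule step_fun_grid_sample[OF S v(3)]) blast
    have sG: "s \<in> GB" using s SG by blast
    define h where "h = (\<lambda>r. op (neg (s r)) (f r))"
    have "h \<in> U"
      using v(4) ObulletI[OF left_quotient_closed[OF sG f] B] good \<sigma>[OF gbullet_in_G[OF f]]
      unfolding h_def by auto
    moreover have "f = bop op s h" unfolding h_def using bop_left_quotient[OF sG f] by simp
    ultimately show ?thesis using s by blast
  qed
  moreover have "{bop op s u | s u. s \<in> \<S> \<and> u \<in> U} \<subseteq> GB" using SG U bop_closed by blast
  ultimately show "\<exists>S\<subseteq>GB. S \<lesssim> K \<and> {bop op s u | s u. s \<in> S \<and> u \<in> U} = GB"
    using SG SK by blast
qed

lemma gbullet_right_factor:
  assumes f: "f \<in> GB" and s: "s \<in> GB" and VG: "V \<subseteq> G" and eV: "e \<in> V"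
    and solvable: "\<And>r. r \<in> {0..<1} \<Longrightarrow> s r = e \<or> (\<exists>v\<in>V. op v (s r) = f r)"
  obtains u where "u \<in> GB" "\<And>r. op (u r) (s r) = f r" "\<And>r. \<exists>v\<in>V. op v (s r) = f r \<Longrightarrow> u r \<in> V"
proof -
  obtain solve where solve_G: "\<And>a b. b \<in> G \<Longrightarrow> solve a b \<in> G" and solve_e: "\<And>b. solve e b = b"
    and solve: "\<And>a b. \<exists>v\<in>V. op v a = b \<Longrightarrow> solve a b \<in> V \<and> op (solve a b) a = b"
    using right_solution_choice[OF VG eV] by blast
  define u where "u = (\<lambda>r. solve (s r) (f r))"
  have uG: "u \<in> GB" unfolding u_def
    by (rule gbullet_pointwise[OF s f]) (use solve_G solve_e in simp_all)
  have "op (u r) (s r) = f r" for r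
  proof (cases "s r = e")
    case True then show ?thesis using solve_e gbullet_in_G[OF f] unfolding u_def by simp
  next
    case False
    then have "r \<in> {0..<1}" using gbullet_outside[OF s] by blast
    then have "\<exists>v\<in>V. op v (s r) = f r" using solvable False by blast
    then show ?thesis using solve unfolding u_def by blast
  qed
  moreover have "u r \<in> V" if "\<exists>v\<in>V. op v (s r) = f r" for r
    using solve[OF that] unfolding u_def by blast
  ultimately show ?thesis using that uG by blast
qed

text \<open>On the cells where \<open>f\<close> jumps, \<open>u \<oplus> s = f\<close> need not be solvable with \<open>u\<close> in \<open>V\<close>, so there
  the sample \<open>s\<close> is the identity and \<open>u = f\<close>.\<close>
lemma bullet_right_narrow:
  assumes K: "infinite K" and narrow: "right_narrow T op e K"
  shows "right_narrow BT (bop op) (\<lambda>r. e) K"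
  unfolding right_narrow_def topspace_bullet
proof (intro allI impI)
  fix U assume U: "U \<subseteq> GB \<and> (\<lambda>r. e) \<in> BT interior_of U"
  then have "(\<lambda>r. e) \<in> BT interior_of U" by blast
  then obtain V \<epsilon> where v: "openin T V" "e \<in> V" "\<epsilon> > 0" "Obullet G e V \<epsilon> \<subseteq> U"
    by (rule bullet_interior_zeroD)
  have VG: "V \<subseteq> G" using openin_subset[OF v(1)] topspace_eq by simp
  obtain S0 where S0: "S0 \<subseteq> G" "S0 \<lesssim> K" "{op u s | s u. s \<in> S0 \<and> u \<in> V} = G"
  proof -
    have "\<exists>S. S \<subseteq> topspace T \<and> S \<lesssim> K \<and> {op u s | s u. s \<in> S \<and> u \<in> V} = topspace T"
      using narrow openin_nbhd_interior[OF v(1,2)] unfolding right_narrow_def by blast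
    then show ?thesis using that unfolding topspace_eq by blast
  qed
  have "\<exists>s\<in>S0. \<exists>v\<in>V. op v s = c" if "c \<in> G" for c
    using S0(3) that by blast
  then obtain \<rho> where \<rho>: "\<And>c. c \<in> G \<Longrightarrow> \<rho> c \<in> S0 \<and> (\<exists>v\<in>V. op v (\<rho> c) = c)"
    by metis
  define \<S> where "\<S> = grid_family (insert e S0) e"
  have SG: "\<S> \<subseteq> GB" unfolding \<S>_def using S0(1) by (intro grid_family_subset_gbullet) auto
  have SK: "\<S> \<lesssim> K" unfolding \<S>_def by (rule grid_family_lepoll[OF K insert_lepoll_infinite[OF K S0(2)]])
  have "f \<in> {bop op u s | s u. s \<in> \<S> \<and> u \<in> U}" if f: "f \<in> GB" for f
  proof -
    obtain S where S: "step_fun S f" using gbullet_step_fun[OF f] by blast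
    have "\<rho> (f r) \<in> S0" for r using \<rho> gbullet_in_G[OF f] by blast
    then obtain s B where s: "s \<in> \<S>" and B: "B \<in> fmeasurable lborel" "measure lborel B < \<epsilon>"
      and cases: "\<And>r. r \<in> {0..<1} \<Longrightarrow> s r = e \<or> s r = \<rho> (f r)"
      and good: "\<And>r. r \<in> {0..<1} \<Longrightarrow> r \<notin> B \<Longrightarrow> s r = \<rho> (f r)"
      unfolding \<S>_def by (rule step_fun_grid_sample[OF S v(3)]) blast
    have sG: "s \<in> GB" using s SG by blast
    show ?thesis
    proof (rule gbullet_right_factor[OF f sG VG v(2)])
      show "s r = e \<or> (\<exists>v\<in>V. op v (s r) = f r)" if r: "r \<in> {0..<1}" for r
        using cases[OF r] \<rho>[OF gbullet_in_G[OF f, of r]] by auto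
      fix u assume u: "u \<in> GB" "\<And>r. op (u r) (s r) = f r"
        and uV: "\<And>r. \<exists>v\<in>V. op v (s r) = f r \<Longrightarrow> u r \<in> V"
      have "u r \<in> V" if r: "r \<in> {0..<1}" "r \<notin> B" for r
      proof -
        have "\<exists>v\<in>V. op v (\<rho> (f r)) = f r" using \<rho>[OF gbullet_in_G[OF f]] by blast
        then have "\<exists>v\<in>V. op v (s r) = f r" using good[OF r] by (simp only:)
        then show ?thesis by (rule uV)
      qed
      then have "u \<in> U" using v(4) ObulletI[OF u(1) B] by blast
      moreover have "f = bop op u s" using u(2) by (simp add: bop_def fun_eq_iff)
      ultimately show ?thesis using s by blast
    qed
  qed
  moreover have "{bop op u s | s u. s \<in> \<S> \<and> u \<in> U} \<subseteq> GB" using SG U bop_closed by blast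
  ultimately show "\<exists>S\<subseteq>GB. S \<lesssim> K \<and> {bop op u s | s u. s \<in> S \<and> u \<in> U} = GB"
    using SG SK by blast
qed

end

section \<open>Metrizability\<close>

definition capped_dist :: "('a \<Rightarrow> 'a \<Rightarrow> real) \<Rightarrow> (real \<Rightarrow> 'a) \<Rightarrow> (real \<Rightarrow> 'a) \<Rightarrow> real \<Rightarrow> real" where
  "capped_dist m f g r = min 1 (m (f r) (g r))"

definition bullet_dist :: "('a \<Rightarrow> 'a \<Rightarrow> real) \<Rightarrow> (real \<Rightarrow> 'a) \<Rightarrow> (real \<Rightarrow> 'a) \<Rightarrow> real" where
  "bullet_dist m f g = (LINT r:{0..<1}|lborel. capped_dist m f g r)"

context topological_gyrogroup_on
begin

context
  fixes m :: "'a \<Rightarrow> 'a \<Rightarrow> real"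
  assumes metric: "Metric_space G m" and metric_topology: "T = Metric_space.mtopology G m"
begin

interpretation M: Metric_space G m by (rule metric)

lemma capped_dist_step_fun:
  assumes "f \<in> GB" "g \<in> GB"
  shows "\<exists>S. step_fun S (capped_dist m f g)"
proof -
  obtain S S' where "step_fun S f" "step_fun S' g" using gbullet_step_fun assms by blast
  from step_fun_combine[OF this, of "\<lambda>a b. min 1 (m a b)"] show ?thesis
    unfolding capped_dist_def by blast
qed

lemma capped_dist_integrable:
  assumes "f \<in> GB" "g \<in> GB"
  shows "set_integrable lborel {0..<1} (capped_dist m f g)"
proof -
  obtain S where "step_fun S (capped_dist m f g)" using capped_dist_step_fun assms by blast
  then show ?thesis
    by (rule step_fun_set_integrable[of _ _ 1]) (auto simp: capped_dist_def)
qed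

lemma Metric_space_bullet_dist: "Metric_space GB (bullet_dist m)"
proof
  fix f g h :: "real \<Rightarrow> 'a"
  show "0 \<le> bullet_dist m f g" unfolding bullet_dist_def set_lebesgue_integral_def
    by (rule integral_nonneg_AE) (auto simp: capped_dist_def indicator_def)
  show "bullet_dist m f g = bullet_dist m g f"
    unfolding bullet_dist_def capped_dist_def by (simp add: M.commute)
  assume f: "f \<in> GB" and g: "g \<in> GB"
  show "bullet_dist m f g = 0 \<longleftrightarrow> f = g"
  proof
    assume "f = g"
    then have "capped_dist m f g = (\<lambda>r. 0)"
      using gbullet_in_G[OF g] by (auto simp: capped_dist_def fun_eq_iff)
    then show "bullet_dist m f g = 0" unfolding bullet_dist_def by simp
  next
    assume d0: "bullet_dist m f g = 0"
    show "f = g"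
    proof (rule ccontr)
      assume "f \<noteq> g"
      then obtain r0 where ne: "f r0 \<noteq> g r0" by blast
      have r0: "r0 \<in> {0..<1}" using ne gbullet_outside[OF f] gbullet_outside[OF g] by metis
      have pos: "capped_dist m f g r0 > 0"
        using ne gbullet_in_G[OF f] gbullet_in_G[OF g] M.nonneg[of "f r0" "g r0"] M.zero
        by (simp add: capped_dist_def order_le_less)
      obtain S where S: "step_fun S (capped_dist m f g)" using capped_dist_step_fun f g by blast
      have "bullet_dist m f g > 0" unfolding bullet_dist_def
        by (rule step_fun_set_integral_pos[OF S _ _ r0 pos]) (simp_all add: capped_dist_def)
      then show False using d0 by simp
    qed
  qed
  assume h: "h \<in> GB"
  have "capped_dist m f h r \<le> capped_dist m f g r + capped_dist m g h r" for r
    using M.triangle[OF gbullet_in_G[OF f] gbullet_in_G[OF g] gbullet_in_G[OF h], of r r r]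
      M.nonneg[of "f r" "g r"] M.nonneg[of "g r" "h r"]
    unfolding capped_dist_def by linarith
  then have "bullet_dist m f h \<le> (LINT r:{0..<1}|lborel. capped_dist m f g r + capped_dist m g h r)"
    unfolding bullet_dist_def
    by (intro set_integral_mono capped_dist_integrable set_integral_add(1) f g h)
  also have "\<dots> = bullet_dist m f g + bullet_dist m g h" unfolding bullet_dist_def
    by (intro set_integral_add(2) capped_dist_integrable f g h)
  finally show "bullet_dist m f h \<le> bullet_dist m f g + bullet_dist m g h" .
qed

interpretation D: Metric_space GB "bullet_dist m" by (rule Metric_space_bullet_dist)

lemma capped_dist_Markov:
  assumes f: "f \<in> GB" and g: "g \<in> GB" and \<eta>: "\<eta> > 0"
  shows "{r \<in> {0..<1}. \<eta> \<le> capped_dist m f g r} \<in> fmeasurable lborel"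
    and "measure lborel {r \<in> {0..<1}. \<eta> \<le> capped_dist m f g r} \<le> bullet_dist m f g / \<eta>"
proof -
  obtain S where st: "step_fun S (capped_dist m f g)" using capped_dist_step_fun f g by blast
  show "{r \<in> {0..<1}. \<eta> \<le> capped_dist m f g r} \<in> fmeasurable lborel"
    by (rule step_fun_level_set_fmeasurable[OF st])
  have "{r \<in> {0..<1}. \<eta> \<le> capped_dist m f g r}
      = {x \<in> space lborel. \<eta> \<le> indicator {0..<1::real} x *\<^sub>R capped_dist m f g x}"
    using \<eta> by (auto simp: indicator_def)
  also have "measure lborel \<dots> \<le> (\<integral>x. indicator {0..<1::real} x *\<^sub>R capped_dist m f g x \<partial>lborel) / \<eta>"
  proof (rule integral_Markov_inequality_measure[where A="{0..<1}"])
    show "integrable lborel (\<lambda>x. indicator {0..<1::real} x *\<^sub>R capped_dist m f g x)"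
      using capped_dist_integrable[OF f g] unfolding set_integrable_def .
  qed (auto simp: capped_dist_def indicator_def \<eta>)
  finally show "measure lborel {r \<in> {0..<1}. \<eta> \<le> capped_dist m f g r} \<le> bullet_dist m f g / \<eta>"
    unfolding bullet_dist_def set_lebesgue_integral_def .
qed

lemma common_radius_finite_translations:
  assumes C: "finite C" "C \<subseteq> G" and V: "openin T V" "e \<in> V"
  obtains \<eta> where "0 < \<eta>" "\<eta> \<le> 1" "\<And>c x. c \<in> C \<Longrightarrow> x \<in> G \<Longrightarrow> m c x < \<eta> \<Longrightarrow> op (neg c) x \<in> V"
proof -
  have "\<exists>\<eta>>0. \<forall>x\<in>G. m c x < \<eta> \<longrightarrow> op (neg c) x \<in> V" if c: "c \<in> C" for c
  proof -
    have cG: "c \<in> G" using c C by blast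
    define W where "W = {x \<in> topspace T. op (neg c) x \<in> V}"
    have W: "openin T W" unfolding W_def
      by (rule openin_continuous_map_preimage[OF continuous_map_left_translation[OF ginv_closed[OF cG]] V(1)])
    have "c \<in> W" unfolding W_def using cG V(2) topspace_eq by simp
    then obtain r where r: "r > 0" "M.mball c r \<subseteq> W"
      using W unfolding metric_topology M.openin_mtopology by blast
    then show ?thesis unfolding W_def using cG by (intro exI[of _ r]) auto
  qed
  then obtain \<eta> where \<eta>: "\<And>c. c \<in> C \<Longrightarrow> \<eta> c > 0 \<and> (\<forall>x\<in>G. m c x < \<eta> c \<longrightarrow> op (neg c) x \<in> V)"
    by metis
  show ?thesis
  proof (rule that[of "Min (insert 1 (\<eta> ` C))"])
    show "0 < Min (insert 1 (\<eta> ` C))" using C \<eta> by (subst Min_gr_iff) auto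
    show "Min (insert 1 (\<eta> ` C)) \<le> 1" using C by (intro Min_le) auto
    fix c x assume "c \<in> C" "x \<in> G" "m c x < Min (insert 1 (\<eta> ` C))"
    moreover have "Min (insert 1 (\<eta> ` C)) \<le> \<eta> c" using C \<open>c \<in> C\<close> by (intro Min_le) auto
    ultimately show "op (neg c) x \<in> V" using \<eta> by fastforce
  qed
qed

text \<open>A small integral of \<open>min 1 (m (f r) (g r))\<close> forces \<open>g r\<close> close to \<open>f r\<close> outside a set of
  small measure (Markov's inequality); since \<open>f\<close> takes finitely many values, one radius serves for all.\<close>
lemma bullet_open_imp_metric_open:
  assumes U: "openin BT U"
  shows "openin D.mtopology U"
  unfolding D.openin_mtopology
proof (intro conjI allI impI)
  show "U \<subseteq> GB" using U unfolding openin_bullet by blast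
  fix f assume fU: "f \<in> U"
  then have f: "f \<in> GB" using U unfolding openin_bullet by blast
  obtain V \<epsilon> where v: "openin T V" "e \<in> V" "\<epsilon> > 0" "bop op f ` Obullet G e V \<epsilon> \<subseteq> U"
    using U fU unfolding openin_bullet by blast
  have C: "finite (f ` {0..<1})" "f ` {0..<1} \<subseteq> G"
    using gbullet_step_fun[OF f] step_fun_finite_range gbullet_in_G[OF f] by auto
  obtain \<eta> where \<eta>: "0 < \<eta>" "\<eta> \<le> 1"
    "\<And>c x. c \<in> f ` {0..<1} \<Longrightarrow> x \<in> G \<Longrightarrow> m c x < \<eta> \<Longrightarrow> op (neg c) x \<in> V"
    using common_radius_finite_translations[OF C v(1,2)] by blast
  have "D.mball f (\<epsilon> * \<eta>) \<subseteq> U"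
  proof
    fix g assume "g \<in> D.mball f (\<epsilon> * \<eta>)"
    then have g: "g \<in> GB" and dfg: "bullet_dist m f g < \<epsilon> * \<eta>" by auto
    define B where "B = {r \<in> {0..<1}. \<eta> \<le> capped_dist m f g r}"
    have "measure lborel B \<le> bullet_dist m f g / \<eta>"
      unfolding B_def by (rule capped_dist_Markov(2)[OF f g \<eta>(1)])
    also have "\<dots> < \<epsilon>" using dfg \<eta>(1) by (simp add: divide_less_eq)
    finally have "measure lborel B < \<epsilon>" .
    moreover have "op (neg (f r)) (g r) \<in> V" if r: "r \<in> {0..<1}" "r \<notin> B" for r
    proof -
      have "capped_dist m f g r < \<eta>" using r unfolding B_def by auto
      then have "m (f r) (g r) < \<eta>" using \<eta>(2) unfolding capped_dist_def by linarith
      then show ?thesis using \<eta>(3) r(1) gbullet_in_G[OF g] by blast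
    qed
    ultimately have "g \<in> bop op f ` Obullet G e V \<epsilon>"
      using translate_ObulletI[OF f g capped_dist_Markov(1)[OF f g \<eta>(1)]] unfolding B_def by blast
    then show "g \<in> U" using v(4) by blast
  qed
  then show "\<exists>r>0. D.mball f r \<subseteq> U" using v(3) \<eta>(1) by (intro exI[of _ "\<epsilon> * \<eta>"]) simp
qed

lemma bullet_dist_translate_le:
  assumes f: "f \<in> GB" and hg: "h \<in> GB" and d: "\<delta> > 0"
    and near: "\<And>r. r \<in> {0..<1} \<Longrightarrow> h r \<in> V \<Longrightarrow> m (f r) (op (f r) (h r)) < \<delta>"
  shows "bullet_dist m f (bop op f h) \<le> measure lborel {r \<in> {0..<1}. h r \<notin> V} + \<delta>"
proof -
  define x where "x = bop op f h"
  have xg: "x \<in> GB" unfolding x_def using bop_closed[OF f hg] .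
  define Bad where "Bad = {r \<in> {0..<1}. h r \<notin> V}"
  have Bs: "Bad \<in> sets lborel" unfolding Bad_def using gbullet_level_set[OF hg] .
  have B01: "Bad \<subseteq> {0..<1}" unfolding Bad_def by blast
  have i1: "set_integrable lborel {0..<1} (\<lambda>r. (1::real) * indicator Bad r)"
    by (rule set_integrable_indicator_sub[OF B01 Bs])
  have i2: "set_integrable lborel {0..<1} (\<lambda>r::real. \<delta>)"
    by (rule step_fun_set_integrable[of "{}" _ "\<delta>"]) (use d in \<open>auto simp: step_fun_def\<close>)
  have "bullet_dist m f x \<le> (LINT r:{0..<1}|lborel. 1 * indicator Bad r + \<delta>)"
    unfolding bullet_dist_def
  proof (rule set_integral_mono[OF capped_dist_integrable[OF f xg] set_integral_add(1)[OF i1 i2]])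
    fix r :: real assume r: "r \<in> {0..<1}"
    show "capped_dist m f x r \<le> 1 * indicator Bad r + \<delta>"
    proof (cases "r \<in> Bad")
      case True then show ?thesis using d by (simp add: capped_dist_def)
    next
      case False
      then have "m (f r) (op (f r) (h r)) < \<delta>" using r near unfolding Bad_def by blast
      then show ?thesis using False unfolding x_def bop_def capped_dist_def by (simp add: min_def)
    qed
  qed
  also have "\<dots> = measure lborel Bad + \<delta>"
    using set_integral_add(2)[OF i1 i2] set_integral_indicator_sub[OF B01 Bs, of 1]
      set_integral_const[of "{0..<1::real}" lborel "\<delta>"]
    by simp
  finally show ?thesis unfolding x_def Bad_def .
qed

lemma metric_open_imp_bullet_open:
  assumes U: "openin D.mtopology U"
  shows "openin BT U"
  unfolding openin_bullet
proof (intro conjI ballI)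
  show "U \<subseteq> GB" using U D.openin_mtopology by blast
  fix f assume fU: "f \<in> U"
  then have f: "f \<in> GB" using U D.openin_mtopology by blast
  obtain \<delta> where d: "\<delta> > 0" "D.mball f \<delta> \<subseteq> U" using U fU D.openin_mtopology by blast
  have C: "finite (f ` {0..<1})" "f ` {0..<1} \<subseteq> G"
    using gbullet_step_fun[OF f] step_fun_finite_range gbullet_in_G[OF f] by auto
  obtain V where V: "openin T V" "e \<in> V"
    and near: "\<And>c y. c \<in> f ` {0..<1} \<Longrightarrow> y \<in> V \<Longrightarrow> op c y \<in> M.mball c (\<delta>/2)"
    by (rule common_nbhd_finite_translations[OF C, of "\<lambda>c. M.mball c (\<delta>/2)"])
      (use C d(1) in \<open>auto simp: metric_topology\<close>)
  have "bop op f ` Obullet G e V (\<delta>/2) \<subseteq> U"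
  proof
    fix x assume "x \<in> bop op f ` Obullet G e V (\<delta>/2)"
    then obtain h where h: "h \<in> Obullet G e V (\<delta>/2)" and x: "x = bop op f h" by blast
    have hg: "h \<in> GB" and mh: "measure lborel {r \<in> {0..<1}. h r \<notin> V} < \<delta>/2"
      using h by (auto simp: Obullet_iff)
    have "m (f r) (op (f r) (h r)) < \<delta>/2" if "r \<in> {0..<1}" "h r \<in> V" for r
      using near[of "f r" "h r"] that by auto
    then have "bullet_dist m f x \<le> measure lborel {r \<in> {0..<1}. h r \<notin> V} + \<delta>/2"
      unfolding x using d(1) by (intro bullet_dist_translate_le[OF f hg]) auto
    then have "x \<in> D.mball f \<delta>" using mh f bop_closed[OF f hg] unfolding x by simp
    then show "x \<in> U" using d(2) by blast
  qed
  then show "\<exists>V \<epsilon>. openin T V \<and> e \<in> V \<and> \<epsilon> > 0 \<and> bop op f ` Obullet G e V \<epsilon> \<subseteq> U"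
    using V d(1) by (intro exI[of _ V] exI[of _ "\<delta>/2"]) simp
qed

lemma bullet_topology_eq_mtopology: "BT = Metric_space.mtopology GB (bullet_dist m)"
  using bullet_open_imp_metric_open metric_open_imp_bullet_open by (auto simp: topology_eq)

end

lemma bullet_metrizable:
  assumes "metrizable_space T"
  shows "metrizable_space BT"
proof -
  obtain M m where metric: "Metric_space M m" and Tm: "T = Metric_space.mtopology M m"
    using assms unfolding metrizable_space_def by blast
  then have "M = G" using topspace_eq Metric_space.topspace_mtopology by metis
  then show ?thesis
    using bullet_topology_eq_mtopology Metric_space_bullet_dist metric Tm
    unfolding metrizable_space_def by metis
qed

end

theorem mainTheorem10:
  fixes G :: "'a set" and op :: "'a \<Rightarrow> 'a \<Rightarrow> 'a" and e :: 'a and T :: "'a topology"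
    and K :: "'k set"
  assumes "infinite K"
    and "topological_gyrogroup G op e T"
  shows "(metrizable_space T \<longrightarrow> metrizable_space (bullet_topology G op e T))
    \<and> (has_local_base_card T e K \<longrightarrow>
         has_local_base_card (bullet_topology G op e T) (\<lambda>r. e) K)
    \<and> (has_network_card T K \<longrightarrow> has_network_card (bullet_topology G op e T) K)
    \<and> (has_dense_card T K \<longrightarrow> has_dense_card (bullet_topology G op e T) K)
    \<and> (narrow T op e K \<longrightarrow> narrow (bullet_topology G op e T) (bop op) (\<lambda>r. e) K)"
proof -
  interpret topological_gyrogroup_on G op e T
    using assms(2) by (rule topological_gyrogroup_on.intro)
  show ?thesis
    using bullet_metrizable bullet_local_base[OF assms(1)] bullet_network[OF assms(1)]
      bullet_dense[OF assms(1)] bullet_left_narrow[OF assms(1)] bullet_right_narrow[OF assms(1)]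
    unfolding narrow_def by blast
qed

end
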